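(* Suppose the third-order ODE $u'''=f(x,u,u',u'')$ (with $I_3\ne0$) is equivalent to $\bar u'''=s\bar u'+\bar u$ ($s$ constant) under a contact transformation $\bar x=\varphi(x,u,p)$, $\bar u=\psi(x,u,p)$, $\bar p=\chi(x,u,p)$ with nonzero Jacobian. Then $s=K$, and the transformation can be obtained as follows, all systems below being compatible: (1) there is a nonzero function $a_1(x,u,p)$ solving the linear system $\hat D_xa_1=J_3I_5a_1$, $a_{1_u}=-Q a_1$, $a_{1_p}=\big(I_4I_5-\tfrac{I_7}{J_3}\big)a_1$, $a_{1_q}=0$; (2) $\varphi$ solves $\hat D_x\varphi=-J_3$, $\varphi_u=-I_7$, $\varphi_p=-I_4$; (3) with $\eta=\hat D_x\chi/\hat D_x\varphi$ (a function of $(x,u,p,q)$) and $\bar f=s\chi+\psi$, the functions $\eta,\chi,\psi$ solve $\hat D_x\eta=-J_3\bar f$, $\eta_u=\big(\tfrac{s+I_5^2}{2}+\tfrac{I_2}{2J_3^2}\big)a_1-I_7\bar f$, $\eta_p=\big(\tfrac{I_5}{J_3}+\tfrac{I_1}{3J_3^2}\big)a_1-I_4\bar f$, $\eta_q=\tfrac{a_1}{J_3^2}$; $\hat D_x\chi=-J_3\eta$, $\chi_u=-I_5a_1-I_7\eta$, $\chi_p=-\tfrac{a_1}{J_3}-I_4\eta$; $I_7\hat D_x\psi=J_3(\psi_u-a_1)$, $\psi_x=\chi\varphi_x-pa_1$, $\psi_p=-I_4\chi$; where also $\chi=\hat D_x\psi/\hat D_x\varphi$.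
   Context: Coordinates $(x,u,p,q)$ with $p=u'$, $q=u''$; subscripts denote partial derivatives; $\hat D_x=\partial_x+p\partial_u+q\partial_p+f\partial_q$. A contact transformation is a local diffeomorphism $\bar x=\varphi(x,u,p)$, $\bar u=\psi(x,u,p)$, $\bar p=\chi(x,u,p)$ with $d\bar u-\bar p\,d\bar x=\lambda(du-p\,dx)$ for some $\lambda(x,u,p)$. Define $I_1=-f_q$, $I_2=-\tfrac29I_1^2-f_p-\tfrac13\hat D_xI_1$, $I_3=-\tfrac13I_1I_2-f_u-\tfrac12\hat D_xI_2$, $J_3=I_3^{1/3}$ (real cube root), $I_4=J_{3_q}$, $I_5=\frac{1}{3J_3^2}(I_1J_3+3\hat D_xJ_3)$, $I_7=-I_{5_q}J_3^2$, $I_9=2J_3\hat D_xI_5-I_2+J_3^2I_5^2$, $K=I_9/J_3^2$, and $Q=-\frac{I_1I_7+3J_3^2I_{5_p}+3J_{3_u}-3J_3I_4\hat D_xI_5}{3J_3}$. *)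

theory Defs
  imports "HOL-Analysis.Analysis"
begin

text \<open>Functions of the jet coordinates (x,u,p,q), curried.\<close>
type_synonym fn4 = "real \<Rightarrow> real \<Rightarrow> real \<Rightarrow> real \<Rightarrow> real"
type_synonym fn3 = "real \<Rightarrow> real \<Rightarrow> real \<Rightarrow> real"

definition lift3 :: "fn3 \<Rightarrow> fn4" where
  "lift3 F = (\<lambda>x u p q. F x u p)"

definition pdx :: "fn4 \<Rightarrow> fn4" where
  "pdx F = (\<lambda>x u p q. deriv (\<lambda>t. F t u p q) x)"
definition pdu :: "fn4 \<Rightarrow> fn4" where
  "pdu F = (\<lambda>x u p q. deriv (\<lambda>t. F x t p q) u)"
definition pdp :: "fn4 \<Rightarrow> fn4" where
  "pdp F = (\<lambda>x u p q. deriv (\<lambda>t. F x u t q) p)"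
definition pdq :: "fn4 \<Rightarrow> fn4" where
  "pdq F = (\<lambda>x u p q. deriv (\<lambda>t. F x u p t) q)"

fun pdir :: "nat \<Rightarrow> fn4 \<Rightarrow> fn4" where
  "pdir 0 F = pdx F"
| "pdir (Suc 0) F = pdu F"
| "pdir (Suc (Suc 0)) F = pdp F"
| "pdir _ F = pdq F"

definition iter_pd :: "nat list \<Rightarrow> fn4 \<Rightarrow> fn4" where
  "iter_pd ds F = foldr pdir ds F"

definition partial_exists :: "nat \<Rightarrow> fn4 \<Rightarrow> real \<Rightarrow> real \<Rightarrow> real \<Rightarrow> real \<Rightarrow> bool" where
  "partial_exists i F x u p q \<longleftrightarrow>
     (if i = 0 then (\<lambda>t. F t u p q) differentiable (at x)
      else if i = 1 then (\<lambda>t. F x t p q) differentiable (at u)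
      else if i = 2 then (\<lambda>t. F x u t q) differentiable (at p)
      else (\<lambda>t. F x u p t) differentiable (at q))"

definition smooth4 :: "(real \<times> real \<times> real \<times> real) set \<Rightarrow> fn4 \<Rightarrow> bool" where
  "smooth4 W F \<longleftrightarrow>
     (\<forall>ds. continuous_on W (\<lambda>(x,u,p,q). iter_pd ds F x u p q) \<and>
           (\<forall>i<4. \<forall>x u p q. (x,u,p,q) \<in> W \<longrightarrow> partial_exists i (iter_pd ds F) x u p q))"

text \<open>Total derivative along the equation u''' = f.\<close>
definition Dhat :: "fn4 \<Rightarrow> fn4 \<Rightarrow> fn4" where
  "Dhat f F = (\<lambda>x u p q. pdx F x u p q + p * pdu F x u p q + q * pdp F x u p q
                         + f x u p q * pdq F x u p q)"

definition I1 :: "fn4 \<Rightarrow> fn4" where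
  "I1 f = (\<lambda>x u p q. - pdq f x u p q)"
definition I2 :: "fn4 \<Rightarrow> fn4" where
  "I2 f = (\<lambda>x u p q. - (2/9) * (I1 f x u p q)^2 - pdp f x u p q - (1/3) * Dhat f (I1 f) x u p q)"
definition I3 :: "fn4 \<Rightarrow> fn4" where
  "I3 f = (\<lambda>x u p q. - (1/3) * I1 f x u p q * I2 f x u p q - pdu f x u p q
                     - (1/2) * Dhat f (I2 f) x u p q)"
definition J3 :: "fn4 \<Rightarrow> fn4" where
  "J3 f = (\<lambda>x u p q. root 3 (I3 f x u p q))"
definition I4 :: "fn4 \<Rightarrow> fn4" where
  "I4 f = pdq (J3 f)"
definition I5 :: "fn4 \<Rightarrow> fn4" where
  "I5 f = (\<lambda>x u p q. (I1 f x u p q * J3 f x u p q + 3 * Dhat f (J3 f) x u p q)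
                     / (3 * (J3 f x u p q)^2))"
definition I7 :: "fn4 \<Rightarrow> fn4" where
  "I7 f = (\<lambda>x u p q. - pdq (I5 f) x u p q * (J3 f x u p q)^2)"
definition I9 :: "fn4 \<Rightarrow> fn4" where
  "I9 f = (\<lambda>x u p q. 2 * J3 f x u p q * Dhat f (I5 f) x u p q - I2 f x u p q
                     + (J3 f x u p q)^2 * (I5 f x u p q)^2)"
definition Kinv :: "fn4 \<Rightarrow> fn4" where
  "Kinv f = (\<lambda>x u p q. I9 f x u p q / (J3 f x u p q)^2)"
definition Qinv :: "fn4 \<Rightarrow> fn4" where
  "Qinv f = (\<lambda>x u p q. - (I1 f x u p q * I7 f x u p q
                          + 3 * (J3 f x u p q)^2 * pdp (I5 f) x u p q
                          + 3 * pdu (J3 f) x u p q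
                          - 3 * J3 f x u p q * I4 f x u p q * Dhat f (I5 f) x u p q)
                        / (3 * J3 f x u p q))"

definition jac3 :: "fn3 \<Rightarrow> fn3 \<Rightarrow> fn3 \<Rightarrow> fn3" where
  "jac3 A B C = (\<lambda>x u p.
     let a1 = pdx (lift3 A) x u p 0; a2 = pdu (lift3 A) x u p 0; a3 = pdp (lift3 A) x u p 0;
         b1 = pdx (lift3 B) x u p 0; b2 = pdu (lift3 B) x u p 0; b3 = pdp (lift3 B) x u p 0;
         c1 = pdx (lift3 C) x u p 0; c2 = pdu (lift3 C) x u p 0; c3 = pdp (lift3 C) x u p 0
     in a1 * (b2 * c3 - b3 * c2) - a2 * (b1 * c3 - b3 * c1) + a3 * (b1 * c2 - b2 * c1))"

text \<open>Contact condition d psi - chi d phi = lambda (du - p dx) on the (x,u,p)-points of W.\<close>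
definition is_contact_on :: "(real \<times> real \<times> real \<times> real) set \<Rightarrow> fn3 \<Rightarrow> fn3 \<Rightarrow> fn3 \<Rightarrow> bool" where
  "is_contact_on W phi psi chi \<longleftrightarrow> (\<exists>lam::fn3. \<forall>x u p q. (x,u,p,q) \<in> W \<longrightarrow>
      pdx (lift3 psi) x u p q - chi x u p * pdx (lift3 phi) x u p q = - p * lam x u p \<and>
      pdu (lift3 psi) x u p q - chi x u p * pdu (lift3 phi) x u p q = lam x u p \<and>
      pdp (lift3 psi) x u p q - chi x u p * pdp (lift3 phi) x u p q = 0)"

text \<open>Second prolongation coordinate qbar = Dhat chi / Dhat phi (does not involve f).\<close>
definition eta_of :: "fn4 \<Rightarrow> fn3 \<Rightarrow> fn3 \<Rightarrow> fn4" where
  "eta_of f phi chi = (\<lambda>x u p q. Dhat f (lift3 chi) x u p q / Dhat f (lift3 phi) x u p q)"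

text \<open>u''' = f is mapped to ubar''' = s ubar' + ubar by the contact transformation
  (phi,psi,chi) on W: the third prolongation maps the equation to the equation, i.e.
  Dhat eta = fbar(phi,psi,chi,eta) * Dhat phi with fbar = s pbar + ubar.\<close>
definition contact_equiv_on ::
  "(real \<times> real \<times> real \<times> real) set \<Rightarrow> fn4 \<Rightarrow> real \<Rightarrow> fn3 \<Rightarrow> fn3 \<Rightarrow> fn3 \<Rightarrow> bool" where
  "contact_equiv_on W f s phi psi chi \<longleftrightarrow>
     smooth4 W (lift3 phi) \<and> smooth4 W (lift3 psi) \<and> smooth4 W (lift3 chi) \<and>
     is_contact_on W phi psi chi \<and>
     (\<forall>x u p q. (x,u,p,q) \<in> W \<longrightarrow>
        jac3 phi psi chi x u p \<noteq> 0 \<and>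
        Dhat f (lift3 phi) x u p q \<noteq> 0 \<and>
        Dhat f (eta_of f phi chi) x u p q
          = (s * chi x u p + psi x u p) * Dhat f (lift3 phi) x u p q)"

end

theory Submission
  imports Defs
begin

text \<open>Let lam be the contact multiplier
  psi_u - chi phi_u (the Jacobian of (phi, psi, chi) equals lam^2, so lam does not vanish) and
  eta = D chi / D phi, where D is the total derivative along the equation u''' = f.
  Differentiating the equivalence condition D eta = (s chi + psi) D phi with respect to q, p and u,
  and commuting these partial derivatives with D, expresses f_q, f_p and f_u through phi, psi, chi
  and their derivatives. Substituting into the invariants gives J3 = - D phi, I4 = - phi_p,
  I7 = - phi_u and I5 = - (chi_u - eta phi_u) / lam, from which K = s and lam_u = - Q lam follow;
  the systems (1)-(3) then hold with a1 = lam.\<close>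

section \<open>Partial derivatives in jet coordinates\<close>

type_synonym pt4 = "real \<times> real \<times> real \<times> real"

definition uncurry4 :: "fn4 \<Rightarrow> pt4 \<Rightarrow> real" where
  "uncurry4 F w = (case w of (x,u,p,q) \<Rightarrow> F x u p q)"

text \<open>Coordinates x, u, p, q are numbered 0, 1, 2, 3; as in pdir, every index above 3 also
  denotes q.\<close>

definition coord :: "nat \<Rightarrow> pt4 \<Rightarrow> real" where
  "coord i w = (case w of (x,u,p,q) \<Rightarrow> (if i = 0 then x else if i = 1 then u else if i
      = 2 then p else q))"

definition upd_coord :: "nat \<Rightarrow> pt4 \<Rightarrow> real \<Rightarrow> pt4" where
  "upd_coord i w t = (case w of (x,u,p,q) \<Rightarrow>
     (if i = 0 then t else x, if i = 1 then t else u, if i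
         = 2 then t else p, if 3 \<le> i then t else q))"

definition pd :: "nat \<Rightarrow> fn4 \<Rightarrow> fn4" where
  "pd i F = (\<lambda>x u p q. deriv (\<lambda>t. uncurry4 F (upd_coord i (x,u,p,q) t)) (coord i
      (x,u,p,q)))"

definition has_pd :: "nat \<Rightarrow> fn4 \<Rightarrow> real \<Rightarrow> pt4 \<Rightarrow>
    bool" where
  "has_pd i F D w \<longleftrightarrow> ((\<lambda>t. uncurry4 F (upd_coord i w t))
      has_real_derivative D) (at (coord i w))"

lemma uncurry4_apply [simp]: "uncurry4 F (x,u,p,q) = F x u p q"
  by (simp add: uncurry4_def)

lemma uncurry4_split: "(\<lambda>(x,u,p,q). F x u p q) = uncurry4 F"
  by (auto simp: uncurry4_def)

lemma uncurry4_add: "uncurry4 (\<lambda>x u p q. F x u p q + G x u p q)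
  = (\<lambda>w. uncurry4 F w + uncurry4 G w)"
  and uncurry4_mult: "uncurry4 (\<lambda>x u p q. F x u p q * G x u p q)
    = (\<lambda>w. uncurry4 F w * uncurry4 G w)"
  and uncurry4_diff: "uncurry4 (\<lambda>x u p q. F x u p q - G x u p q)
    = (\<lambda>w. uncurry4 F w - uncurry4 G w)"
  and uncurry4_minus: "uncurry4 (\<lambda>x u p q. - F x u p q) = (\<lambda>w. - uncurry4 F w)"
  and uncurry4_inverse: "uncurry4 (\<lambda>x u p q. inverse (G x u p q))
    = (\<lambda>w. inverse (uncurry4 G w))"
  and uncurry4_const: "uncurry4 (\<lambda>x u p q. c) = (\<lambda>w. c)"
  by (auto simp: uncurry4_def)

lemma pdx_eq_pd: "pdx F = pd 0 F"
  and pdu_eq_pd: "pdu F = pd 1 F"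
  and pdp_eq_pd: "pdp F = pd 2 F"
  and pdq_eq_pd: "pdq F = pd 3 F"
  by (simp_all add: pdx_def pdu_def pdp_def pdq_def pd_def upd_coord_def coord_def)

lemma upd_coord_min: "upd_coord i = upd_coord (min i 3)"
  by (auto simp: upd_coord_def min_def fun_eq_iff)

lemma coord_min: "coord i = coord (min i 3)"
  by (auto simp: coord_def min_def fun_eq_iff)

lemma pd_min: "pd i = pd (min i 3)"
  unfolding pd_def by (metis upd_coord_min coord_min)

lemma pdir_eq_pd: "pdir i F = pd (min i 3) F"
proof -
  consider "i = 0" | "i = 1" | "i = 2" | k where "i = Suc (Suc (Suc k))"
    by (metis One_nat_def less_2_cases not_less_eq numeral_2_eq_2 nat.exhaust)
  then show ?thesis
    by cases (simp_all add: pdx_eq_pd pdu_eq_pd pdp_eq_pd pdq_eq_pd numeral_2_eq_2 numeral_3_eq_3)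
qed

lemma partial_exists_iff:
  "partial_exists i F x u p q \<longleftrightarrow>
     (\<lambda>t. uncurry4 F (upd_coord i (x,u,p,q) t)) differentiable (at (coord i (x,u,p,q)))"
  by (auto simp: partial_exists_def upd_coord_def coord_def)

lemma partial_exists_min: "partial_exists i F = partial_exists (min i 3) F"
  by (auto simp: partial_exists_def min_def fun_eq_iff)

lemma upd_coord_coord [simp]: "upd_coord i w (coord i w) = w"
  by (cases w) (auto simp: upd_coord_def coord_def)

lemma upd_coord_upd_coord [simp]: "upd_coord i (upd_coord i w s) t = upd_coord i w t"
  by (cases w) (simp add: upd_coord_def)

lemma coord_upd_coord [simp]: "coord i (upd_coord i w t) = t"
  by (cases w) (simp add: upd_coord_def coord_def)

lemma upd_coord_commute:
  "i < 4 \<Longrightarrow> j < 4 \<Longrightarrow> i \<noteq> j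
      \<Longrightarrow> upd_coord i (upd_coord j w t) s = upd_coord j (upd_coord i w s) t"
  by (cases w) (auto simp: upd_coord_def)

lemma continuous_on_upd_coord: "continuous_on UNIV (upd_coord i w)"
proof -
  have "continuous_on UNIV (\<lambda>t::real. if b then t else c)" for b c
    by (cases b) (auto intro: continuous_intros)
  moreover obtain x u p q where "w = (x,u,p,q)" by (cases w) auto
  ultimately show ?thesis
    by (auto simp: upd_coord_def intro!: continuous_on_Pair)
qed

lemma continuous_on_upd_coord2: "continuous_on UNIV (\<lambda>z. upd_coord i (upd_coord j w (snd
  z)) (fst z))"
proof -
  have if2: "continuous_on UNIV (\<lambda>z::real\<times>real. if P then fst z else if Q then snd z
      else c)" for P Q c
    by (cases P; cases Q) (auto intro: continuous_intros)
  obtain w1 w2 w3 w4 where "w = (w1,w2,w3,w4)" by (cases w) auto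
  then have "(\<lambda>z. upd_coord i (upd_coord j w (snd z)) (fst z)) = (\<lambda>z.
     (if i = 0 then fst z else if j = 0 then snd z else w1,
      if i = 1 then fst z else if j = 1 then snd z else w2,
      if i = 2 then fst z else if j = 2 then snd z else w3,
      if 3 \<le> i then fst z else if 3 \<le> j then snd z else w4))"
    by (auto simp: upd_coord_def fun_eq_iff)
  then show ?thesis
    by (simp only:) (intro continuous_on_Pair if2)
qed

lemma eventually_upd_coord_in:
  assumes "open W" "w \<in> W"
  shows "eventually (\<lambda>t. upd_coord i w t \<in> W) (nhds (coord i w))"
proof -
  have "open (upd_coord i w -` W)"
    using continuous_on_open_vimage[of UNIV "upd_coord i w"] continuous_on_upd_coord assms(1)
    by auto
  moreover have "coord i w \<in> upd_coord i w -` W" using assms(2) by simp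
  ultimately show ?thesis using eventually_nhds_in_open by fastforce
qed

lemma has_pd_imp_pd: "has_pd i F D (x,u,p,q) \<Longrightarrow> pd i F x u p q = D"
  unfolding has_pd_def pd_def by (simp add: DERIV_imp_deriv)

lemma has_pd_imp_partial_exists: "has_pd i F D (x,u,p,q)
  \<Longrightarrow> partial_exists i F x u p q"
  unfolding has_pd_def partial_exists_iff real_differentiable_def by blast

lemma partial_exists_imp_has_pd: "partial_exists i F x u p q
  \<Longrightarrow> has_pd i F (pd i F x u p q) (x,u,p,q)"
  unfolding has_pd_def partial_exists_iff pd_def by (simp add: DERIV_deriv_iff_real_differentiable)

lemma has_pd_const: "has_pd i (\<lambda>x u p q. c) 0 w"
  by (simp add: has_pd_def uncurry4_const)

lemma has_pd_coord_p: "has_pd i (\<lambda>x u p q. p) (if i = 2 then 1 else 0) w"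
  and has_pd_coord_q: "has_pd i (\<lambda>x u p q. q) (if 3 \<le> i then 1 else 0) w"
  by (cases w; cases "i = 2"; cases "3 \<le> i"; simp add: has_pd_def upd_coord_def coord_def)+

lemma has_pd_add:
  "has_pd i F D w \<Longrightarrow> has_pd i G E w
      \<Longrightarrow> has_pd i (\<lambda>x u p q. F x u p q + G x u p q) (D + E) w"
  unfolding has_pd_def uncurry4_add by (rule DERIV_add)

lemma has_pd_diff:
  "has_pd i F D w \<Longrightarrow> has_pd i G E w
      \<Longrightarrow> has_pd i (\<lambda>x u p q. F x u p q - G x u p q) (D - E) w"
  unfolding has_pd_def uncurry4_diff by (rule DERIV_diff)

lemma has_pd_minus: "has_pd i F D w
  \<Longrightarrow> has_pd i (\<lambda>x u p q. - F x u p q) (- D) w"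
  unfolding has_pd_def uncurry4_minus by (rule DERIV_minus)

lemma has_pd_mult:
  "has_pd i F D w \<Longrightarrow> has_pd i G E w \<Longrightarrow>
   has_pd i (\<lambda>x u p q. F x u p q * G x u p q) (D * uncurry4 G w + uncurry4 F w * E) w"
  unfolding has_pd_def uncurry4_mult using DERIV_mult'[where s
      = UNIV] by (fastforce simp: mult.commute)

lemma has_pd_inverse:
  assumes "has_pd i G D w" "uncurry4 G w \<noteq> 0"
  shows "has_pd i (\<lambda>x u p q. inverse (G x u p q)) (- D
    * (inverse (uncurry4 G w))\<^sup>2) w"
  using DERIV_inverse_fun[OF assms(1)[unfolded has_pd_def]] assms(2)
  by (simp add: has_pd_def uncurry4_inverse power2_eq_square)

definition agree_on :: "pt4 set \<Rightarrow> fn4 \<Rightarrow> fn4 \<Rightarrow> bool" where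
  "agree_on W F G \<longleftrightarrow> (\<forall>x u p q. (x,u,p,q) \<in> W \<longrightarrow> F x
      u p q = G x u p q)"

lemma eventually_agree_on_line:
  assumes "open W" "w \<in> W" "agree_on W F G"
  shows "eventually (\<lambda>t. uncurry4 F (upd_coord i w t)
    = uncurry4 G (upd_coord i w t)) (nhds (coord i w))"
  using eventually_upd_coord_in[OF assms(1,2)]
  by (rule eventually_mono) (use assms(3) in \<open>auto simp: agree_on_def uncurry4_def split:
      prod.splits\<close>)

lemma pd_cong_on:
  assumes "open W" "(x,u,p,q) \<in> W" "agree_on W F G"
  shows "pd i F x u p q = pd i G x u p q"
  unfolding pd_def by (rule deriv_cong_ev[OF eventually_agree_on_line[OF assms]]) simp

lemma has_pd_cong_on:
  assumes "open W" "w \<in> W" "agree_on W F G" "has_pd i F D w"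
  shows "has_pd i G D w"
  using assms(4) DERIV_cong_ev[OF refl eventually_agree_on_line[OF assms(1-3), of i] refl]
  by (simp add: has_pd_def)

lemma pd_const [simp]: "pd i (\<lambda>x u p q. c) x u p q = 0"
  by (rule has_pd_imp_pd[OF has_pd_const])

lemma pd_coord_p: "pd i (\<lambda>x u p q. p) x u p q = (if i = 2 then 1 else 0)"
  and pd_coord_q: "pd i (\<lambda>x u p q. q) x u p q = (if 3 \<le> i then 1 else 0)"
  by (rule has_pd_imp_pd[OF has_pd_coord_p], rule has_pd_imp_pd[OF has_pd_coord_q])

lemma smooth4_pd: "smooth4 W F \<Longrightarrow> smooth4 W (pd i F)"
proof -
  assume "smooth4 W F"
  moreover have "pd i F = pdir (min i 3) F" using pdir_eq_pd[of "min i 3" F] pd_min[of i] by simp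
  moreover have "iter_pd ds (pdir d F) = iter_pd (ds @ [d]) F" for ds d
    by (simp add: iter_pd_def)
  ultimately show ?thesis unfolding smooth4_def by metis
qed

lemma smooth4_continuous: "smooth4 W F \<Longrightarrow> continuous_on W (uncurry4 F)"
  unfolding smooth4_def uncurry4_split[symmetric] by (metis iter_pd_def foldr_Nil id_apply)

lemma smooth4_partial_exists: "smooth4 W F \<Longrightarrow> (x,u,p,q) \<in> W
  \<Longrightarrow> partial_exists i F x u p q"
proof -
  assume "smooth4 W F" "(x,u,p,q) \<in> W"
  then have "partial_exists (min i 3) (iter_pd [] F) x u p q" unfolding smooth4_def by auto
  then show ?thesis using partial_exists_min by (simp add: iter_pd_def)
qed

section \<open>Smoothness of generated functions\<close>

text \<open>Closing the smooth functions under agreement on W makes the class closed under pd, which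
  lets smoothness of the generated functions be proved by a single induction.\<close>

inductive smooth_closure :: "pt4 set \<Rightarrow> fn4 \<Rightarrow> bool" for W where
  smooth: "smooth4 W F \<Longrightarrow> smooth_closure W F"
| const: "smooth_closure W (\<lambda>x u p q. c)"
| coord_p: "smooth_closure W (\<lambda>x u p q. p)"
| coord_q: "smooth_closure W (\<lambda>x u p q. q)"
| add: "smooth_closure W F \<Longrightarrow> smooth_closure W G \<Longrightarrow>
    smooth_closure W (\<lambda>x u p q. F x u p q + G x u p q)"
| mult: "smooth_closure W F \<Longrightarrow> smooth_closure W G \<Longrightarrow>
    smooth_closure W (\<lambda>x u p q. F x u p q * G x u p q)"
| inverse: "smooth_closure W G \<Longrightarrow> (\<forall>x u p q. (x,u,p,q) \<in> W
    \<longrightarrow> G x u p q \<noteq> 0) \<Longrightarrow>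
    smooth_closure W (\<lambda>x u p q. inverse (G x u p q))"
| cong: "smooth_closure W F \<Longrightarrow> agree_on W F G \<Longrightarrow> smooth_closure W G"

lemma smooth_closure_stepI:
  assumes "continuous_on W (uncurry4 F)"
    and "\<And>i x u p q. (x,u,p,q) \<in> W \<Longrightarrow> has_pd i F (D i x u p q) (x,u,p,q)"
    and "\<And>i. smooth_closure W (D i)"
  shows "continuous_on W (uncurry4 F) \<and> (\<forall>i x u p q. (x,u,p,q) \<in> W
    \<longrightarrow> partial_exists i F x u p q)
    \<and> (\<forall>i. smooth_closure W (pd i F))"
proof (intro conjI allI impI)
  show "partial_exists i F x u p q" if "(x,u,p,q) \<in> W" for i x u p q
    using has_pd_imp_partial_exists[OF assms(2)[OF that]] .
  have "agree_on W (D i) (pd i F)" for i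
    using has_pd_imp_pd[OF assms(2)] by (simp add: agree_on_def)
  then show "smooth_closure W (pd i F)" for i
    using smooth_closure.cong[OF assms(3)] by blast
qed (rule assms(1))

lemma smooth_closure_step:
  assumes W: "open W" and "smooth_closure W F"
  shows "continuous_on W (uncurry4 F) \<and> (\<forall>i x u p q. (x,u,p,q) \<in> W
    \<longrightarrow> partial_exists i F x u p q)
    \<and> (\<forall>i. smooth_closure W (pd i F))"
  using assms(2)
proof induction
  case (smooth F)
  then show ?case
    by (intro smooth_closure_stepI[where D = "\<lambda>i. pd i F"] smooth_closure.smooth smooth4_pd
        smooth4_continuous partial_exists_imp_has_pd smooth4_partial_exists)
next
  case (const c)
  show ?case
    by (rule smooth_closure_stepI[where D = "\<lambda>i x u p q. 0"])
       (simp_all add: uncurry4_const has_pd_const smooth_closure.const)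
next
  case coord_p
  have "continuous_on W (uncurry4 (\<lambda>x u p q. p))"
    unfolding uncurry4_def by (auto simp: case_prod_beta intro!: continuous_intros)
  then show ?case
    by (rule smooth_closure_stepI[where D = "\<lambda>i x u p q. if i = 2 then 1 else 0"])
       (simp_all add: has_pd_coord_p smooth_closure.const)
next
  case coord_q
  have "continuous_on W (uncurry4 (\<lambda>x u p q. q))"
    unfolding uncurry4_def by (auto simp: case_prod_beta intro!: continuous_intros)
  then show ?case
    by (rule smooth_closure_stepI[where D = "\<lambda>i x u p q. if 3 \<le> i then 1 else 0"])
       (simp_all add: has_pd_coord_q smooth_closure.const)
next
  case (add F G)
  then show ?case
    by (intro smooth_closure_stepI[where D = "\<lambda>i x u p q. pd i F x u p q + pd i G x u p q"]
        smooth_closure.add has_pd_add partial_exists_imp_has_pd)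
       (auto simp: uncurry4_add intro: continuous_on_add)
next
  case (mult F G)
  have "has_pd i (\<lambda>x u p q. F x u p q * G x u p q)
      (pd i F x u p q * G x u p q + F x u p q * pd i G x u p q) (x,u,p,q)"
    if "(x,u,p,q) \<in> W" for i x u p q
    using has_pd_mult[OF partial_exists_imp_has_pd partial_exists_imp_has_pd] mult.IH that by auto
  with mult show ?case
    by (intro smooth_closure_stepI[where
          D = "\<lambda>i x u p q. pd i F x u p q * G x u p q + F x u p q * pd i G x u p q"]
        smooth_closure.add smooth_closure.mult)
       (auto simp: uncurry4_mult intro: continuous_on_mult)
next
  case (inverse G)
  have "has_pd i (\<lambda>x u p q. inverse (G x u p q))
      ((- 1) * pd i G x u p q * (inverse (G x u p q) * inverse (G x u p q))) (x,u,p,q)"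
    if "(x,u,p,q) \<in> W" for i x u p q
    using has_pd_inverse[OF partial_exists_imp_has_pd] inverse that by (auto simp: power2_eq_square)
  moreover have "continuous_on W (uncurry4 (\<lambda>x u p q. inverse (G x u p q)))"
    unfolding uncurry4_inverse using inverse
    by (auto intro!: continuous_on_inverse simp: uncurry4_def)
  ultimately show ?case using inverse
    by (intro smooth_closure_stepI[where D = "\<lambda>i x u p q.
          (- 1) * pd i G x u p q * (inverse (G x u p q) * inverse (G x u p q))"]
        smooth_closure.mult smooth_closure.const smooth_closure.inverse) auto
next
  case (cong F G)
  have "has_pd i G (pd i F x u p q) (x,u,p,q)" if "(x,u,p,q) \<in> W" for i x u p q
    using has_pd_cong_on[OF W that cong.hyps(2) partial_exists_imp_has_pd] cong.IH that by blast
  moreover have "continuous_on W (uncurry4 G)"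
  proof (rule continuous_on_cong[THEN iffD1, OF refl _ conjunct1[OF cong.IH]])
    show "uncurry4 F w = uncurry4 G w" if "w \<in> W" for w
      using cong.hyps(2) that by (cases w) (simp add: agree_on_def)
  qed
  ultimately show ?case using cong.IH
    by (intro smooth_closure_stepI[where D = "\<lambda>i. pd i F"]) auto
qed

lemma smooth_closure_imp_smooth4:
  assumes W: "open W" and "smooth_closure W F"
  shows "smooth4 W F"
proof -
  have "smooth_closure W (iter_pd ds F)" for ds
  proof (induction ds)
    case Nil then show ?case using assms by (simp add: iter_pd_def)
  next
    case (Cons d ds)
    have "iter_pd (d # ds) F = pd (min d 3) (iter_pd ds F)"
      by (simp add: iter_pd_def pdir_eq_pd)
    then show ?case using smooth_closure_step[OF W Cons] by simp
  qed
  then show ?thesis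
    unfolding smooth4_def using smooth_closure_step[OF W] by (simp add: uncurry4_split)
qed

section \<open>Symmetry of mixed partial derivatives\<close>

text \<open>By the mean value theorem, applied twice in either order, the second
  difference of g over a small square of side h equals h^2 gab and h^2 gba at points near
  (s0, t0); continuity of gab and gba then forces gab s0 t0 = gba s0 t0.\<close>

lemma mixed_partials_commute:
  fixes g ga gb gab gba :: "real \<Rightarrow> real \<Rightarrow> real"
  assumes r: "r > 0"
    and d1: "\<And>s t. \<bar>s - s0\<bar> < r \<Longrightarrow> \<bar>t - t0\<bar> < r
      \<Longrightarrow> ((\<lambda>s. g s t) has_real_derivative ga s t) (at s)"
    and d2: "\<And>s t. \<bar>s - s0\<bar> < r \<Longrightarrow> \<bar>t - t0\<bar> < r
      \<Longrightarrow> ((\<lambda>t. g s t) has_real_derivative gb s t) (at t)"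
    and d12: "\<And>s t. \<bar>s - s0\<bar> < r \<Longrightarrow> \<bar>t - t0\<bar> < r
      \<Longrightarrow> ((\<lambda>t. ga s t) has_real_derivative gab s t) (at t)"
    and d21: "\<And>s t. \<bar>s - s0\<bar> < r \<Longrightarrow> \<bar>t - t0\<bar> < r
      \<Longrightarrow> ((\<lambda>s. gb s t) has_real_derivative gba s t) (at s)"
    and c12: "isCont (\<lambda>z. gab (fst z) (snd z)) (s0, t0)"
    and c21: "isCont (\<lambda>z. gba (fst z) (snd z)) (s0, t0)"
  shows "gab s0 t0 = gba s0 t0"
proof (rule ccontr)
  assume ne: "gab s0 t0 \<noteq> gba s0 t0"
  define d where "d = \<bar>gab s0 t0 - gba s0 t0\<bar> / 2"
  have dpos: "d > 0" using ne by (simp add: d_def)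
  obtain e1 where e1: "e1 > 0" "\<And>z. dist z (s0,t0) < e1
      \<Longrightarrow> dist (gab (fst z) (snd z)) (gab s0 t0) < d"
    using c12[unfolded continuous_at_eps_delta] dpos by fastforce
  obtain e2 where e2: "e2 > 0" "\<And>z. dist z (s0,t0) < e2
      \<Longrightarrow> dist (gba (fst z) (snd z)) (gba s0 t0) < d"
    using c21[unfolded continuous_at_eps_delta] dpos by fastforce
  define h where "h = min r (min e1 e2) / 4"
  have hpos: "h > 0" using r e1 e2 by (simp add: h_def)
  have hr: "h < r" using r e1 e2 by (simp add: h_def)
  have close: "dist (a, b) (s0, t0) < min e1 e2" if "\<bar>a - s0\<bar> \<le> h" "\<bar>b
      - t0\<bar> \<le> h" for a b
  proof -
    have "dist (a, b) (s0, t0) = sqrt ((a - s0)\<^sup>2 + (b - t0)\<^sup>2)"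
      by (simp add: dist_Pair_Pair dist_real_def)
    also have "\<dots> \<le> \<bar>a - s0\<bar>
        + \<bar>b - t0\<bar>" by (rule sqrt_sum_squares_le_sum_abs)
    also have "\<dots> \<le> 2 * h" using that by simp
    also have "\<dots> < min e1 e2" using r e1 e2 unfolding h_def by linarith
    finally show ?thesis .
  qed
  obtain \<xi> where xi: "s0 < \<xi>" "\<xi> < s0 + h"
    "(g (s0+h) (t0+h) - g (s0+h) t0) - (g s0 (t0+h) - g s0 t0)
        = (s0 + h - s0) * (ga \<xi> (t0+h) - ga \<xi> t0)"
  proof -
    have "\<exists>z. s0 < z \<and> z < s0
        + h \<and> ((\<lambda>s. g s (t0+h) - g s t0) (s0+h) - (\<lambda>s. g s (t0+h) - g s t0) s0
       = (s0 + h - s0) * (ga z (t0+h) - ga z t0))"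
      by (rule MVT2) (use hpos hr in \<open>auto intro!: derivative_eq_intros d1\<close>)
    then show ?thesis using that by auto
  qed
  obtain \<tau> where tau: "t0 < \<tau>" "\<tau> < t0 + h" "ga \<xi> (t0+h) - ga \<xi> t0
      = (t0 + h - t0) * gab \<xi> \<tau>"
  proof -
    have "\<exists>z. t0 < z \<and> z < t0 + h \<and> ga \<xi> (t0+h) - ga \<xi> t0
        = (t0 + h - t0) * gab \<xi> z"
      by (rule MVT2) (use hpos hr xi in \<open>auto intro!: d12\<close>)
    then show ?thesis using that by auto
  qed
  obtain \<tau>' where tau': "t0 < \<tau>'" "\<tau>' < t0 + h"
    "(g (s0+h) (t0+h) - g s0 (t0+h)) - (g (s0+h) t0 - g s0 t0)
        = (t0 + h - t0) * (gb (s0+h) \<tau>' - gb s0 \<tau>')"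
  proof -
    have "\<exists>z. t0 < z \<and> z < t0
        + h \<and> ((\<lambda>t. g (s0+h) t - g s0 t) (t0+h) - (\<lambda>t. g (s0+h) t - g s0 t) t0
       = (t0 + h - t0) * (gb (s0+h) z - gb s0 z))"
      by (rule MVT2) (use hpos hr in \<open>auto intro!: derivative_eq_intros d2\<close>)
    then show ?thesis using that by auto
  qed
  obtain \<xi>' where xi': "s0 < \<xi>'" "\<xi>' < s0 + h" "gb (s0+h) \<tau>' - gb s0 \<tau>'
      = (s0 + h - s0) * gba \<xi>' \<tau>'"
  proof -
    have "\<exists>z. s0 < z \<and> z < s0 + h \<and> gb (s0+h) \<tau>' - gb s0 \<tau>'
        = (s0 + h - s0) * gba z \<tau>'"
      by (rule MVT2) (use hpos hr tau' in \<open>auto intro!: d21\<close>)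
    then show ?thesis using that by auto
  qed
  have "h * (h * gab \<xi> \<tau>) = h * (h * gba \<xi>' \<tau>')"
    using xi(3) tau(3) tau'(3) xi'(3) by (simp add: algebra_simps)
  then have eq: "gab \<xi> \<tau> = gba \<xi>' \<tau>'" using hpos by simp
  have "dist (\<xi>, \<tau>) (s0,t0) < e1" using close[of \<xi> \<tau>] xi tau by simp
  then have a1: "\<bar>gab \<xi> \<tau>
      - gab s0 t0\<bar> < d" using e1(2)[of "(\<xi>,\<tau>)"] by (simp add: dist_real_def)
  have "dist (\<xi>', \<tau>') (s0,t0) < e2" using close[of \<xi>' \<tau>'] xi' tau' by simp
  then have a2: "\<bar>gba \<xi>' \<tau>'
      - gba s0 t0\<bar> < d" using e2(2)[of "(\<xi>',\<tau>')"] by (simp add: dist_real_def)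
  have tri: "\<And>A a b::real. \<bar>A - a\<bar> < \<bar>a - b\<bar> / 2
      \<Longrightarrow> \<bar>A - b\<bar> < \<bar>a - b\<bar> / 2 \<Longrightarrow> False"
    by (simp add: abs_if split: if_split_asm)
  show False using tri[of "gab \<xi> \<tau>" "gab s0 t0" "gba s0 t0"] a1 a2 eq unfolding d_def
      by simp
qed

section \<open>Calculus on an open domain\<close>

locale open_domain =
  fixes W :: "pt4 set"
  assumes open_W: "open W"
begin

lemma smooth4_closure: "smooth_closure W F \<Longrightarrow> smooth4 W F"
  by (rule smooth_closure_imp_smooth4[OF open_W])

lemma smooth4_const: "smooth4 W (\<lambda>x u p q. c)"
  and smooth4_coord_p: "smooth4 W (\<lambda>x u p q. p)"
  and smooth4_coord_q: "smooth4 W (\<lambda>x u p q. q)"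
  by (rule smooth4_closure, rule smooth_closure.const smooth_closure.coord_p
      smooth_closure.coord_q)+

lemma smooth4_add: "smooth4 W F \<Longrightarrow> smooth4 W G
  \<Longrightarrow> smooth4 W (\<lambda>x u p q. F x u p q + G x u p q)"
  by (blast intro: smooth4_closure smooth_closure.add smooth_closure.smooth)

lemma smooth4_mult: "smooth4 W F \<Longrightarrow> smooth4 W G
  \<Longrightarrow> smooth4 W (\<lambda>x u p q. F x u p q * G x u p q)"
  by (blast intro: smooth4_closure smooth_closure.mult smooth_closure.smooth)

lemma smooth4_inverse:
  "smooth4 W G \<Longrightarrow> (\<forall>x u p q. (x,u,p,q) \<in> W \<longrightarrow> G x u p q
      \<noteq> 0) \<Longrightarrow>
   smooth4 W (\<lambda>x u p q. inverse (G x u p q))"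
  by (blast intro: smooth4_closure smooth_closure.inverse smooth_closure.smooth)

lemma smooth4_cong: "smooth4 W F \<Longrightarrow> agree_on W F G \<Longrightarrow> smooth4 W G"
  by (blast intro: smooth4_closure smooth_closure.cong smooth_closure.smooth)

lemma smooth4_diff:
  assumes "smooth4 W F" "smooth4 W G"
  shows "smooth4 W (\<lambda>x u p q. F x u p q - G x u p q)"
proof -
  have "smooth4 W (\<lambda>x u p q. F x u p q + (- 1) * G x u p q)"
    by (intro smooth4_add smooth4_mult smooth4_const assms)
  then show ?thesis by (rule smooth4_cong) (simp add: agree_on_def)
qed

lemma smooth4_minus:
  assumes "smooth4 W F"
  shows "smooth4 W (\<lambda>x u p q. - F x u p q)"
proof -
  have "smooth4 W (\<lambda>x u p q. (- 1) * F x u p q)"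
    by (intro smooth4_mult smooth4_const assms)
  then show ?thesis by (rule smooth4_cong) (simp add: agree_on_def)
qed

lemma smooth4_has_pd: "smooth4 W F \<Longrightarrow> w \<in> W
  \<Longrightarrow> has_pd i F (uncurry4 (pd i F) w) w"
  by (cases w) (auto intro: partial_exists_imp_has_pd smooth4_partial_exists)

context
  fixes F G :: fn4 and x u p q :: real
  assumes F: "smooth4 W F" and G: "smooth4 W G" and w: "(x,u,p,q) \<in> W"
begin

lemma pd_add: "pd i (\<lambda>x u p q. F x u p q + G x u p q) x u p q
  = pd i F x u p q + pd i G x u p q"
  using has_pd_imp_pd[OF has_pd_add[OF smooth4_has_pd[OF F w] smooth4_has_pd[OF G w]]] by simp

lemma pd_diff: "pd i (\<lambda>x u p q. F x u p q - G x u p q) x u p q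
  = pd i F x u p q - pd i G x u p q"
  using has_pd_imp_pd[OF has_pd_diff[OF smooth4_has_pd[OF F w] smooth4_has_pd[OF G w]]] by simp

lemma pd_mult:
  "pd i (\<lambda>x u p q. F x u p q * G x u p q) x u p q
      = pd i F x u p q * G x u p q + F x u p q * pd i G x u p q"
  using has_pd_imp_pd[OF has_pd_mult[OF smooth4_has_pd[OF F w] smooth4_has_pd[OF G w]]] by simp

end

lemma pd_minus:
  "smooth4 W F \<Longrightarrow> (x,u,p,q) \<in> W
      \<Longrightarrow> pd i (\<lambda>x u p q. - F x u p q) x u p q = - pd i F x u p q"
  using has_pd_imp_pd[OF has_pd_minus[OF smooth4_has_pd]] by simp

lemma pd_inverse:
  "smooth4 W F \<Longrightarrow> (x,u,p,q) \<in> W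
      \<Longrightarrow> F x u p q \<noteq> 0 \<Longrightarrow>
   pd i (\<lambda>x u p q. inverse (F x u p q)) x u p q
       = - pd i F x u p q * (inverse (F x u p q) * inverse (F x u p q))"
  using has_pd_imp_pd[OF has_pd_inverse[OF smooth4_has_pd]] by (simp add: power2_eq_square)

lemma pd_cong_at: "agree_on W F G \<Longrightarrow> (x,u,p,q) \<in> W
  \<Longrightarrow> pd i F x u p q = pd i G x u p q"
  using pd_cong_on[OF open_W] by blast

lemma pd_commute:
  assumes F: "smooth4 W F" and w: "w \<in> W" and ij: "i < 4" "j < 4"
  shows "uncurry4 (pd i (pd j F)) w = uncurry4 (pd j (pd i F)) w"
proof (cases "i = j")
  case False
  define e where "e = (\<lambda>s t. upd_coord i (upd_coord j w t) s)"
  define s0 where "s0 = coord i w"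
  define t0 where "t0 = coord j w"
  have e0: "e s0 t0 = w" by (simp add: e_def s0_def t0_def)
  have e_alt: "e s t = upd_coord j (upd_coord i w s) t" for s t
    using upd_coord_commute[OF ij False] by (simp add: e_def)
  have ec: "continuous_on UNIV (\<lambda>z. e (fst z) (snd z))"
    unfolding e_def by (rule continuous_on_upd_coord2)
  have "open ((\<lambda>z. e (fst z) (snd z)) -` W)"
    using continuous_on_open_vimage[of UNIV "\<lambda>z. e (fst z) (snd z)"] ec open_W by auto
  moreover have "(s0,t0) \<in> (\<lambda>z. e (fst z) (snd z)) -` W" using e0 w by simp
  ultimately obtain r where r: "r > 0" "ball (s0,t0) r \<subseteq> (\<lambda>z. e (fst z) (snd z))
      -` W"
    using open_contains_ball by blast
  have inW: "e s t \<in> W" if "\<bar>s - s0\<bar> < r/2" "\<bar>t - t0\<bar> < r/2" for s t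
  proof -
    have "dist (s0,t0) (s,t) = sqrt ((s0 - s)\<^sup>2
        + (t0 - t)\<^sup>2)" by (simp add: dist_Pair_Pair dist_real_def)
    also have "\<dots> \<le> \<bar>s0 - s\<bar>
        + \<bar>t0 - t\<bar>" by (rule sqrt_sum_squares_le_sum_abs)
    also have "\<dots> < r" using that by linarith
    finally show ?thesis using r(2) by auto
  qed
  have Di: "((\<lambda>s. uncurry4 G (e s t)) has_real_derivative uncurry4 (pd i G) (e s t)) (at s)"
    if "smooth4 W G" "\<bar>s - s0\<bar> < r/2" "\<bar>t - t0\<bar> < r/2" for G s t
    using smooth4_has_pd[OF that(1) inW[OF that(2,3)], of i] by (simp add: has_pd_def e_def)
  have Dj: "((\<lambda>t. uncurry4 G (e s t)) has_real_derivative uncurry4 (pd j G) (e s t)) (at t)"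
    if "smooth4 W G" "\<bar>s - s0\<bar> < r/2" "\<bar>t - t0\<bar> < r/2" for G s t
    using smooth4_has_pd[OF that(1) inW[OF that(2,3)], of j] by (simp add: has_pd_def e_alt)
  have cont: "isCont (\<lambda>z. uncurry4 G (e (fst z) (snd z))) (s0,t0)" if "smooth4 W G" for G
  proof -
    have "isCont (uncurry4 G) (e s0 t0)"
      using smooth4_continuous[OF that] open_W w e0 continuous_on_eq_continuous_at by metis
    moreover have "isCont (\<lambda>z. e (fst z) (snd z)) (s0,t0)"
      using ec continuous_on_eq_continuous_at by blast
    ultimately show ?thesis
      using continuous_at_compose[of "(s0,t0)" "\<lambda>z. e (fst z) (snd z)" "uncurry4 G"]
      by (simp add: o_def)
  qed
  have "uncurry4 (pd j (pd i F)) (e s0 t0) = uncurry4 (pd i (pd j F)) (e s0 t0)"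
  proof (rule mixed_partials_commute[where r = "r/2" and g = "\<lambda>s t. uncurry4 F (e s t)"
        and ga = "\<lambda>s t. uncurry4 (pd i F) (e s t)" and gb
          = "\<lambda>s t. uncurry4 (pd j F) (e s t)"
        and gab = "\<lambda>s t. uncurry4 (pd j (pd i F)) (e s t)"
        and gba = "\<lambda>s t. uncurry4 (pd i (pd j F)) (e s t)"])
    have "smooth4 W (pd i F)" "smooth4 W (pd j F)" using F by (simp_all add: smooth4_pd)
    then show "isCont (\<lambda>z. uncurry4 (pd j (pd i F)) (e (fst z) (snd z))) (s0, t0)"
      "isCont (\<lambda>z. uncurry4 (pd i (pd j F)) (e (fst z) (snd z))) (s0, t0)"
      by (simp_all add: cont smooth4_pd)
  qed (use r F smooth4_pd[OF F] in \<open>simp_all add: Di Dj\<close>)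
  then show ?thesis using e0 by simp
qed simp

lemma pd_commute_at:
  "smooth4 W F \<Longrightarrow> (x,u,p,q) \<in> W \<Longrightarrow> i < 4 \<Longrightarrow> j < 4
      \<Longrightarrow> pd i (pd j F) x u p q = pd j (pd i F) x u p q"
  using pd_commute[of F "(x,u,p,q)" i j] by simp

end

section \<open>The total derivative\<close>

lemma Dhat_eq_pd: "Dhat f G = (\<lambda>x u p q. pd 0 G x u p q + p * pd 1 G x u p q
  + q * pd 2 G x u p q
  + f x u p q * pd 3 G x u p q)"
  by (simp add: Dhat_def pdx_eq_pd pdu_eq_pd pdp_eq_pd pdq_eq_pd)

lemma Dhat_const [simp]: "Dhat f (\<lambda>x u p q. c) x u p q = 0"
  by (simp add: Dhat_eq_pd)

context open_domain
begin

lemma smooth4_Dhat: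
  assumes "smooth4 W f" "smooth4 W G"
  shows "smooth4 W (Dhat f G)"
  unfolding Dhat_eq_pd by (intro smooth4_add smooth4_mult smooth4_pd smooth4_coord_p
      smooth4_coord_q assms)

lemma Dhat_cong_on: "agree_on W F G \<Longrightarrow> (x,u,p,q) \<in> W
  \<Longrightarrow> Dhat f F x u p q = Dhat f G x u p q"
  unfolding Dhat_eq_pd using pd_cong_on[OF open_W] by simp

context
  fixes F G :: fn4 and x u p q :: real
  assumes F: "smooth4 W F" and G: "smooth4 W G" and w: "(x,u,p,q) \<in> W"
begin

lemma Dhat_add: "Dhat f (\<lambda>x u p q. F x u p q + G x u p q) x u p q
  = Dhat f F x u p q + Dhat f G x u p q"
  unfolding Dhat_eq_pd by (simp add: pd_add[OF F G w] algebra_simps)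

lemma Dhat_diff: "Dhat f (\<lambda>x u p q. F x u p q - G x u p q) x u p q
  = Dhat f F x u p q - Dhat f G x u p q"
  unfolding Dhat_eq_pd by (simp add: pd_diff[OF F G w] algebra_simps)

lemma Dhat_mult:
  "Dhat f (\<lambda>x u p q. F x u p q * G x u p q) x u p q
      = Dhat f F x u p q * G x u p q + F x u p q * Dhat f G x u p q"
  unfolding Dhat_eq_pd by (simp add: pd_mult[OF F G w] algebra_simps)

end

lemma Dhat_minus:
  "smooth4 W F \<Longrightarrow> (x,u,p,q) \<in> W \<Longrightarrow>
   Dhat f (\<lambda>x u p q. - F x u p q) x u p q = - Dhat f F x u p q"
  unfolding Dhat_eq_pd by (simp add: pd_minus algebra_simps)

lemma Dhat_inverse:
  "smooth4 W F \<Longrightarrow> (x,u,p,q) \<in> W \<Longrightarrow> F x u p q \<noteq> 0 \<Longrightarrow>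
   Dhat f (\<lambda>x u p q. inverse (F x u p q)) x u p q
   = - Dhat f F x u p q * (inverse (F x u p q) * inverse (F x u p q))"
  unfolding Dhat_eq_pd by (simp add: pd_inverse algebra_simps)

lemma pd_Dhat:
  assumes f: "smooth4 W f" and G: "smooth4 W G" and w: "(x,u,p,q) \<in> W" and k: "k < 4"
  shows "pd k (Dhat f G) x u p q = Dhat f (pd k G) x u p q
     + (if k = 2 then pd 1 G x u p q else if k = 3 then pd 2 G x u p q else 0)
     + pd k f x u p q * pd 3 G x u p q"
proof -
  have "pd k (Dhat f G) x u p q = pd k (pd 0 G) x u p q
      + (pd k (\<lambda>x u p q. p) x u p q * pd 1 G x u p q + p * pd k (pd 1 G) x u p q)
      + (pd k (\<lambda>x u p q. q) x u p q * pd 2 G x u p q + q * pd k (pd 2 G) x u p q)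
      + (pd k f x u p q * pd 3 G x u p q + f x u p q * pd k (pd 3 G) x u p q)"
    unfolding Dhat_eq_pd
    by (simp add: pd_add pd_mult smooth4_pd G f w smooth4_add smooth4_mult smooth4_coord_p
        smooth4_coord_q del: pd_coord_p pd_coord_q)
  also have "\<dots> = Dhat f (pd k G) x u p q
     + (if k = 2 then pd 1 G x u p q else if k = 3 then pd 2 G x u p q else 0)
     + pd k f x u p q * pd 3 G x u p q"
    unfolding Dhat_eq_pd using k by (auto simp: pd_commute_at[OF G w k] pd_coord_p pd_coord_q)
  finally show ?thesis .
qed

lemma pdu_Dhat:
  "smooth4 W f \<Longrightarrow> smooth4 W G \<Longrightarrow> (x,u,p,q) \<in> W \<Longrightarrow>
   pd 1 (Dhat f G) x u p q = Dhat f (pd 1 G) x u p q + pd 1 f x u p q * pd 3 G x u p q"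
  using pd_Dhat[of f G x u p q 1] by simp

lemma pdp_Dhat:
  "smooth4 W f \<Longrightarrow> smooth4 W G \<Longrightarrow> (x,u,p,q) \<in> W \<Longrightarrow>
   pd 2 (Dhat f G) x u p q = Dhat f (pd 2 G) x u p q + pd 1 G x u p q
   + pd 2 f x u p q * pd 3 G x u p q"
  using pd_Dhat[of f G x u p q 2] by simp

lemma pdq_Dhat:
  "smooth4 W f \<Longrightarrow> smooth4 W G \<Longrightarrow> (x,u,p,q) \<in> W \<Longrightarrow>
   pd 3 (Dhat f G) x u p q = Dhat f (pd 3 G) x u p q + pd 2 G x u p q
   + pd 3 f x u p q * pd 3 G x u p q"
  using pd_Dhat[of f G x u p q 3] by simp

end

section \<open>Functions independent of q\<close>

definition indep_q :: "fn4 \<Rightarrow> bool" where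
  "indep_q F \<longleftrightarrow> (\<forall>x u p q q'. F x u p q = F x u p q')"

lemma indep_q_at_0: "indep_q F \<Longrightarrow> F x u p 0 = F x u p q"
  unfolding indep_q_def by metis

lemma indep_q_pdq: "indep_q F \<Longrightarrow> pd 3 F x u p q = 0"
proof -
  assume "indep_q F"
  then have "(\<lambda>t. uncurry4 F (upd_coord 3 (x,u,p,q) t)) = (\<lambda>t. F x u p q)"
    unfolding indep_q_def by (auto simp: upd_coord_def fun_eq_iff)
  then show ?thesis by (simp add: pd_def)
qed

lemma indep_q_pd: "indep_q F \<Longrightarrow> i < 3 \<Longrightarrow> indep_q (pd i F)"
proof -
  assume F: "indep_q F" and i: "i < 3"
  have "(\<lambda>t. uncurry4 F (upd_coord i (x,u,p,q) t))
      = (\<lambda>t. uncurry4 F (upd_coord i (x,u,p,q') t))"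
    for x u p q q'
    using F i unfolding indep_q_def by (auto simp: upd_coord_def fun_eq_iff)
  moreover have "coord i (x,u,p,q) = coord i (x,u,p,q')" for x u p q q'
    using i by (simp add: coord_def)
  ultimately show ?thesis unfolding indep_q_def pd_def by metis
qed

lemma indep_q_lift3 [simp]: "indep_q (lift3 h)"
  and indep_q_const: "indep_q (\<lambda>x u p q. c)"
  by (simp_all add: indep_q_def lift3_def)

lemma indep_q_add: "indep_q F \<Longrightarrow> indep_q G \<Longrightarrow> indep_q (\<lambda>x u p q. F x u p q + G x u p q)"
  and indep_q_diff: "indep_q F \<Longrightarrow> indep_q G \<Longrightarrow> indep_q (\<lambda>x u p q. F x u p q - G x u p q)"
  and indep_q_mult: "indep_q F \<Longrightarrow> indep_q G \<Longrightarrow> indep_q (\<lambda>x u p q. F x u p q * G x u p q)"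
  and indep_q_inverse: "indep_q F \<Longrightarrow> indep_q (\<lambda>x u p q. inverse (F x u p q))"
  unfolding indep_q_def by metis+

section \<open>The invariants of an equation equivalent to the model\<close>

locale contact_equivalence = open_domain +
  fixes f :: fn4 and s :: real and phi psi chi :: fn3
  assumes smooth_f: "smooth4 W f"
    and equiv: "contact_equiv_on W f s phi psi chi"
begin

text \<open>Keeps the coordinate index 1 of pd from being rewritten to Suc 0.\<close>

declare One_nat_def [simp del]

definition "Phi = lift3 phi"
definition "Psi = lift3 psi"
definition "Chi = lift3 chi"
definition "Eta = eta_of f phi chi"
definition "fbar = (\<lambda>x u p q. s * Chi x u p q + Psi x u p q)"
definition "D_Phi = Dhat f Phi"
definition "D2_Phi = Dhat f D_Phi"
definition "D3_Phi = Dhat f D2_Phi"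
definition "D_Chi = Dhat f Chi"
definition "Phi_u = pd 1 Phi"
definition "Phi_p = pd 2 Phi"
definition "Phi_up = pd 2 Phi_u"
definition "Chi_u = pd 1 Chi"
definition "Eta_u = pd 1 Eta"
definition "Eta_p = pd 2 Eta"
definition "D_Phi_u = Dhat f Phi_u"
definition "D_Phi_p = Dhat f Phi_p"
definition "D_Eta_u = Dhat f Eta_u"

text \<open>The contact multiplier: d psi - chi d phi = lam (du - p dx). It is the solution a1 of
  system (1).\<close>

definition "lam = (\<lambda>x u p q. pd 1 Psi x u p q - Chi x u p q * Phi_u x u p q)"
definition "lam_u = pd 1 lam"
definition "mu = (\<lambda>x u p q. Chi_u x u p q - Eta x u p q * Phi_u x u p q)"
definition "inv_D_Phi = (\<lambda>x u p q. inverse (D_Phi x u p q))"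
definition "inv_lam = (\<lambda>x u p q. inverse (lam x u p q))"

lemma smooth4_Phi: "smooth4 W Phi"
  and smooth4_Psi: "smooth4 W Psi"
  and smooth4_Chi: "smooth4 W Chi"
  using equiv unfolding contact_equiv_on_def Phi_def Psi_def Chi_def by auto

lemma D_Phi_nonzero: "(x,u,p,q) \<in> W \<Longrightarrow> D_Phi x u p q \<noteq> 0"
  using equiv unfolding contact_equiv_on_def D_Phi_def Phi_def by auto

lemma Dhat_Eta: "(x,u,p,q) \<in> W
  \<Longrightarrow> Dhat f Eta x u p q = fbar x u p q * D_Phi x u p q"
  using equiv unfolding contact_equiv_on_def D_Phi_def Phi_def Eta_def fbar_def Chi_def Psi_def
  by (auto simp: lift3_def)

lemma jac3_nonzero: "(x,u,p,q) \<in> W \<Longrightarrow> jac3 phi psi chi x u p \<noteq> 0"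
  using equiv unfolding contact_equiv_on_def by auto

lemma smooth4_D_Phi: "smooth4 W D_Phi" unfolding D_Phi_def
  by (rule smooth4_Dhat[OF smooth_f smooth4_Phi])
lemma smooth4_D2_Phi: "smooth4 W D2_Phi" unfolding D2_Phi_def
  by (rule smooth4_Dhat[OF smooth_f smooth4_D_Phi])
lemma smooth4_D3_Phi: "smooth4 W D3_Phi" unfolding D3_Phi_def
  by (rule smooth4_Dhat[OF smooth_f smooth4_D2_Phi])
lemma smooth4_D_Chi: "smooth4 W D_Chi" unfolding D_Chi_def
  by (rule smooth4_Dhat[OF smooth_f smooth4_Chi])
lemma smooth4_Phi_u: "smooth4 W Phi_u" unfolding Phi_u_def by (rule smooth4_pd[OF smooth4_Phi])
lemma smooth4_Phi_p: "smooth4 W Phi_p" unfolding Phi_p_def by (rule smooth4_pd[OF smooth4_Phi])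
lemma smooth4_Phi_up: "smooth4 W Phi_up" unfolding Phi_up_def by (rule smooth4_pd[OF smooth4_Phi_u])
lemma smooth4_Chi_u: "smooth4 W Chi_u" unfolding Chi_u_def by (rule smooth4_pd[OF smooth4_Chi])
lemma smooth4_D_Phi_u: "smooth4 W D_Phi_u" unfolding D_Phi_u_def
  by (rule smooth4_Dhat[OF smooth_f smooth4_Phi_u])
lemma smooth4_D_Phi_p: "smooth4 W D_Phi_p" unfolding D_Phi_p_def
  by (rule smooth4_Dhat[OF smooth_f smooth4_Phi_p])
lemma smooth4_lam: "smooth4 W lam"
  unfolding lam_def by (rule smooth4_diff[OF smooth4_pd[OF smooth4_Psi] smooth4_mult[OF smooth4_Chi
      smooth4_Phi_u]])
lemma smooth4_lam_u: "smooth4 W lam_u" unfolding lam_u_def by (rule smooth4_pd[OF smooth4_lam])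
lemma smooth4_inv_D_Phi: "smooth4 W inv_D_Phi"
  unfolding inv_D_Phi_def using smooth4_inverse[OF smooth4_D_Phi] D_Phi_nonzero by blast

lemma Eta_eq: "Eta = (\<lambda>x u p q. D_Chi x u p q * inv_D_Phi x u p q)"
  by (simp add: Eta_def eta_of_def D_Chi_def inv_D_Phi_def D_Phi_def Phi_def Chi_def divide_inverse
      fun_eq_iff)

lemma smooth4_Eta: "smooth4 W Eta" unfolding Eta_eq
  by (rule smooth4_mult[OF smooth4_D_Chi smooth4_inv_D_Phi])
lemma smooth4_Eta_u: "smooth4 W Eta_u" unfolding Eta_u_def by (rule smooth4_pd[OF smooth4_Eta])
lemma smooth4_Eta_p: "smooth4 W Eta_p" unfolding Eta_p_def by (rule smooth4_pd[OF smooth4_Eta])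
lemma smooth4_D_Eta_u: "smooth4 W D_Eta_u" unfolding D_Eta_u_def
  by (rule smooth4_Dhat[OF smooth_f smooth4_Eta_u])
lemma smooth4_mu: "smooth4 W mu"
  unfolding mu_def by (rule smooth4_diff[OF smooth4_Chi_u smooth4_mult[OF smooth4_Eta
      smooth4_Phi_u]])
lemma smooth4_fbar: "smooth4 W fbar"
  unfolding fbar_def by (rule smooth4_add[OF smooth4_mult[OF smooth4_const smooth4_Chi]
      smooth4_Psi])

lemma indep_q_Phi_u: "indep_q Phi_u" and indep_q_Phi_p: "indep_q Phi_p" and indep_q_Chi_u: "indep_q
  Chi_u"
  by (simp_all add: Phi_u_def Phi_p_def Chi_u_def Phi_def Chi_def indep_q_pd)
lemma indep_q_lam: "indep_q lam"
  unfolding lam_def Psi_def Chi_def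
  by (intro indep_q_diff indep_q_mult indep_q_pd indep_q_lift3 indep_q_Phi_u) simp
lemma indep_q_fbar: "indep_q fbar"
  unfolding fbar_def Psi_def Chi_def by (intro indep_q_add indep_q_mult indep_q_const indep_q_lift3)

lemma pdq_zero: "pd 3 Phi x u p q = 0" "pd 3 Psi x u p q = 0" "pd 3 Chi x u p q = 0"
  "pd 3 Phi_u x u p q = 0" "pd 3 Phi_p x u p q = 0" "pd 3 Chi_u x u p q = 0" "pd 3 lam x u p q = 0"
  "pd 3 fbar x u p q = 0" "pd 3 inv_lam x u p q = 0"
  by (simp_all add: indep_q_pdq Phi_def Psi_def Chi_def indep_q_Phi_u indep_q_Phi_p indep_q_Chi_u
      indep_q_lam indep_q_fbar inv_lam_def indep_q_inverse)

lemma pdq_zero_fun: "pd 3 Phi = (\<lambda>x u p q. 0)" "pd 3 Chi = (\<lambda>x u p q. 0)" "pd 3 Psi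
  = (\<lambda>x u p q. 0)"
  using pdq_zero by (auto simp: fun_eq_iff)

lemma pdu_Psi: "pd 1 Psi = (\<lambda>x u p q. Chi x u p q * Phi_u x u p q + lam x u p q)"
  by (simp add: lam_def fun_eq_iff)

lemma pdx_Psi: "(x,u,p,q) \<in> W
  \<Longrightarrow> pd 0 Psi x u p q = Chi x u p q * pd 0 Phi x u p q - p * lam x u p q"
  and pdp_Psi: "(x,u,p,q) \<in> W \<Longrightarrow> pd 2 Psi x u p q = Chi x u p q * Phi_p x u p q"
proof -
  assume w: "(x,u,p,q) \<in> W"
  obtain l where L: "\<forall>x u p q. (x,u,p,q) \<in> W \<longrightarrow>
      pdx Psi x u p q - chi x u p * pdx Phi x u p q = - p * l x u p \<and>
      pdu Psi x u p q - chi x u p * pdu Phi x u p q = l x u p \<and>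
      pdp Psi x u p q - chi x u p * pdp Phi x u p q = 0"
    using equiv unfolding contact_equiv_on_def is_contact_on_def Phi_def Psi_def by blast
  have Chi: "Chi x u p q = chi x u p" by (simp add: Chi_def lift3_def)
  from L w have "lam x u p q = l x u p"
    by (simp add: lam_def Chi Phi_u_def pdu_eq_pd)
  with L w show "pd 0 Psi x u p q = Chi x u p q * pd 0 Phi x u p q - p * lam x u p q"
    by (simp add: Chi pdx_eq_pd algebra_simps)
  from L w show "pd 2 Psi x u p q = Chi x u p q * Phi_p x u p q"
    by (simp add: Chi Phi_p_def pdp_eq_pd algebra_simps)
qed

lemma agree_pdp_Psi: "agree_on W (pd 2 Psi) (\<lambda>x u p q. Chi x u p q * Phi_p x u p q)"
  using pdp_Psi by (auto simp: agree_on_def)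
lemma agree_pdx_Psi:
  "agree_on W (pd 0 Psi) (\<lambda>x u p q. Chi x u p q * pd 0 Phi x u p q - p * lam x u p q)"
  using pdx_Psi by (auto simp: agree_on_def)

lemma D_Phi_expand: "D_Phi x u p q = pd 0 Phi x u p q + p * Phi_u x u p q + q * Phi_p x u p q"
  unfolding D_Phi_def Dhat_eq_pd Phi_u_def Phi_p_def by (simp add: pdq_zero)
lemma D_Chi_expand: "D_Chi x u p q = pd 0 Chi x u p q + p * Chi_u x u p q + q * pd 2 Chi x u p q"
  unfolding D_Chi_def Dhat_eq_pd Chi_u_def by (simp add: pdq_zero)
lemma Dhat_Psi: "(x,u,p,q) \<in> W
  \<Longrightarrow> Dhat f Psi x u p q = Chi x u p q * D_Phi x u p q"
  using pdx_Psi[of x u p q] pdp_Psi[of x u p q]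
  by (simp add: Dhat_eq_pd D_Phi_expand pdu_Psi pdq_zero algebra_simps)

lemmas smooth4_facts = smooth_f smooth4_Phi smooth4_Psi smooth4_Chi smooth4_D_Phi smooth4_D2_Phi
  smooth4_D3_Phi smooth4_D_Chi smooth4_Phi_u smooth4_Phi_p smooth4_Phi_up smooth4_Chi_u
  smooth4_D_Phi_u smooth4_D_Phi_p smooth4_lam smooth4_lam_u smooth4_inv_D_Phi smooth4_Eta
  smooth4_Eta_u smooth4_Eta_p smooth4_D_Eta_u smooth4_mu smooth4_fbar

lemma pdq_D_Phi: "(x,u,p,q) \<in> W \<Longrightarrow> pd 3 D_Phi x u p q = Phi_p x u p q"
  using pdq_Dhat[OF smooth_f smooth4_Phi]
  by (simp add: D_Phi_def[symmetric] pdq_zero_fun Dhat_const Phi_p_def pdq_zero)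
lemma pdu_D_Phi: "(x,u,p,q) \<in> W \<Longrightarrow> pd 1 D_Phi x u p q = D_Phi_u x u p q"
  using pdu_Dhat[OF smooth_f smooth4_Phi]
  by (simp add: D_Phi_def[symmetric] D_Phi_u_def Phi_u_def pdq_zero)
lemma pdp_D_Phi: "(x,u,p,q) \<in> W
  \<Longrightarrow> pd 2 D_Phi x u p q = D_Phi_p x u p q + Phi_u x u p q"
  using pdp_Dhat[OF smooth_f smooth4_Phi]
  by (simp add: D_Phi_def[symmetric] D_Phi_p_def Phi_p_def Phi_u_def pdq_zero)

lemma pdu_Phi_p: "(x,u,p,q) \<in> W \<Longrightarrow> pd 1 Phi_p x u p q = Phi_up x u p q"
  unfolding Phi_up_def Phi_u_def Phi_p_def
      using pd_commute_at[OF smooth4_Phi, of x u p q 1 2] by simp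

lemma pdp_lam_Chi: assumes w: "(x,u,p,q) \<in> W"
  shows "pd 2 lam x u p q = Chi_u x u p q * Phi_p x u p q - pd 2 Chi x u p q * Phi_u x u p q"
proof -
  have "pd 2 (pd 1 Psi) x u p q = pd 1 (pd 2 Psi) x u p q"
    using pd_commute_at[OF smooth4_Psi w, of 2 1] by simp
  also have "\<dots> = pd 1 (\<lambda>x u p q. Chi x u p q * Phi_p x u p q) x u p q"
    by (rule pd_cong_at[OF agree_pdp_Psi w])
  finally have 1: "pd 2 (pd 1 Psi) x u p q
      = Chi_u x u p q * Phi_p x u p q + Chi x u p q * Phi_up x u p q"
    using w by (simp add: pd_mult smooth4_Chi smooth4_Phi_p Chi_u_def pdu_Phi_p)
  have "pd 2 lam x u p q = pd 2 (pd 1 Psi) x u p q - (pd 2 Chi x u p q * Phi_u x u p q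
      + Chi x u p q * Phi_up x u p q)"
    unfolding lam_def using w
    by (simp add: pd_diff pd_mult smooth4_pd smooth4_facts smooth4_mult Phi_up_def)
  then show ?thesis using 1 by simp
qed

lemma lam_eq_minors: assumes w: "(x,u,p,q) \<in> W"
  shows "lam x u p q = pd 2 Chi x u p q * pd 0 Phi x u p q - pd 0 Chi x u p q * Phi_p x u p q
     - p * (Chi_u x u p q * Phi_p x u p q - pd 2 Chi x u p q * Phi_u x u p q)"
proof -
  have "pd 2 (pd 0 Psi) x u p q = pd 0 (pd 2 Psi) x u p q"
    using pd_commute_at[OF smooth4_Psi w, of 2 0] by simp
  also have "\<dots> = pd 0 (\<lambda>x u p q. Chi x u p q * Phi_p x u p q) x u p q"
    by (rule pd_cong_at[OF agree_pdp_Psi w])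
  finally have 1: "pd 2 (pd 0 Psi) x u p q
      = pd 0 Chi x u p q * Phi_p x u p q + Chi x u p q * pd 0 Phi_p x u p q"
    using w by (simp add: pd_mult smooth4_Chi smooth4_Phi_p)
  have "pd 2 (pd 0 Psi) x u p q = pd 2 (\<lambda>x u p q. Chi x u p q * pd 0 Phi x u p q
      - p * lam x u p q) x u p q"
    by (rule pd_cong_at[OF agree_pdx_Psi w])
  also have "\<dots> = pd 2 Chi x u p q * pd 0 Phi x u p q + Chi x u p q * pd 2 (pd 0 Phi) x u p q
       - (lam x u p q + p * pd 2 lam x u p q)"
    using w by (simp add: pd_diff pd_mult smooth4_pd smooth4_facts smooth4_mult smooth4_coord_p
        pd_coord_p)
  also have "pd 2 (pd 0 Phi) x u p q = pd 0 Phi_p x u p q"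
    using pd_commute_at[OF smooth4_Phi w, of 2 0] by (simp add: Phi_p_def)
  finally show ?thesis using 1 pdp_lam_Chi[OF w] by (simp add: algebra_simps)
qed

lemma jac3_eq_lam_sq: assumes w: "(x,u,p,q) \<in> W"
  shows "jac3 phi psi chi x u p = lam x u p q * lam x u p q"
proof -
  have qP: "indep_q (pd i Phi)" "indep_q (pd i Psi)" "indep_q (pd i Chi)" if "i < 3" for i
    using indep_q_pd[OF indep_q_lift3 that] unfolding Phi_def Psi_def Chi_def by auto
  have e1: "pdx (lift3 phi) x u p 0 = pd 0 Phi x u p q" "pdu (lift3 phi) x u p 0 = Phi_u x u p q"
    "pdp (lift3 phi) x u p 0 = Phi_p x u p q"
    "pdx (lift3 psi) x u p 0 = pd 0 Psi x u p q" "pdu (lift3 psi) x u p 0 = pd 1 Psi x u p q"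
    "pdp (lift3 psi) x u p 0 = pd 2 Psi x u p q"
    "pdx (lift3 chi) x u p 0 = pd 0 Chi x u p q" "pdu (lift3 chi) x u p 0 = Chi_u x u p q"
    "pdp (lift3 chi) x u p 0 = pd 2 Chi x u p q"
    using indep_q_at_0[OF qP(1), of 0] indep_q_at_0[OF qP(1), of 1] indep_q_at_0[OF qP(1), of 2]
      indep_q_at_0[OF qP(2), of 0] indep_q_at_0[OF qP(2), of 1] indep_q_at_0[OF qP(2), of 2]
      indep_q_at_0[OF qP(3), of 0] indep_q_at_0[OF qP(3), of 1] indep_q_at_0[OF qP(3), of 2]
    by (simp_all add: pdx_eq_pd pdu_eq_pd pdp_eq_pd Phi_def Psi_def Chi_def Phi_u_def Phi_p_def
        Chi_u_def)
  have "jac3 phi psi chi x u p = lam x u p q * (pd 2 Chi x u p q * pd 0 Phi x u p q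
      - pd 0 Chi x u p q * Phi_p x u p q
     - p * (Chi_u x u p q * Phi_p x u p q - pd 2 Chi x u p q * Phi_u x u p q))"
    unfolding jac3_def Let_def e1 pdx_Psi[OF w] pdp_Psi[OF w] pdu_Psi by algebra
  also have "\<dots> = lam x u p q * lam x u p q" using lam_eq_minors[OF w] by simp
  finally show ?thesis .
qed

lemma lam_nonzero: "(x,u,p,q) \<in> W \<Longrightarrow> lam x u p q \<noteq> 0"
  using jac3_eq_lam_sq jac3_nonzero by fastforce

lemma smooth4_inv_lam: "smooth4 W inv_lam" unfolding inv_lam_def
  using smooth4_inverse[OF smooth4_lam] lam_nonzero by blast

lemmas deriv_rules = pd_add pd_diff pd_mult pd_minus Dhat_add Dhat_diff
  Dhat_mult Dhat_minus pd_const Dhat_const smooth4_facts smooth4_inv_lam smooth4_add smooth4_mult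
  smooth4_diff smooth4_minus smooth4_const

lemma D_Phi_inv: "(x,u,p,q) \<in> W \<Longrightarrow> D_Phi x u p q * inv_D_Phi x u p q = 1"
  using D_Phi_nonzero by (simp add: inv_D_Phi_def)

lemma pd_inv_D_Phi: assumes w: "(x,u,p,q) \<in> W"
  shows "pd i inv_D_Phi x u p q = - pd i D_Phi x u p q * (inv_D_Phi x u p q * inv_D_Phi x u p q)"
  unfolding inv_D_Phi_def using smooth4_D_Phi w D_Phi_nonzero[OF w] by (rule pd_inverse)

lemma Dhat_inv_D_Phi: assumes w: "(x,u,p,q) \<in> W"
  shows "Dhat f inv_D_Phi x u p q = - D2_Phi x u p q * (inv_D_Phi x u p q * inv_D_Phi x u p q)"
  unfolding inv_D_Phi_def D2_Phi_def
      using smooth4_D_Phi w D_Phi_nonzero[OF w] by (rule Dhat_inverse)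

lemma lam_eq_D_minor:
  assumes w: "(x,u,p,q) \<in> W"
  shows "pd 2 Chi x u p q * D_Phi x u p q - D_Chi x u p q * Phi_p x u p q = lam x u p q"
  using lam_eq_minors[OF w] by (simp add: D_Phi_expand D_Chi_expand algebra_simps)

lemma pdq_Eta: assumes w: "(x,u,p,q) \<in> W"
  shows "pd 3 Eta x u p q = lam x u p q * (inv_D_Phi x u p q * inv_D_Phi x u p q)"
proof -
  have pDX: "pd 3 D_Chi x u p q = pd 2 Chi x u p q"
    using pdq_Dhat[OF smooth_f smooth4_Chi w]
    by (simp add: D_Chi_def[symmetric] pdq_zero_fun Dhat_const pdq_zero)
  note key = lam_eq_D_minor[OF w]
  have "pd 3 Eta x u p q = pd 2 Chi x u p q * inv_D_Phi x u p q
      - D_Chi x u p q * (Phi_p x u p q * (inv_D_Phi x u p q * inv_D_Phi x u p q))"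
    unfolding Eta_eq using w by (simp add: deriv_rules pDX pd_inv_D_Phi Dhat_inv_D_Phi pdq_D_Phi)
  also have "\<dots> = (pd 2 Chi x u p q * D_Phi x u p q
      - D_Chi x u p q * Phi_p x u p q) * (inv_D_Phi x u p q * inv_D_Phi x u p q)"
    using D_Phi_inv[OF w] by algebra
  finally show ?thesis using key by simp
qed

lemma D_Chi_eq: "(x,u,p,q) \<in> W \<Longrightarrow> D_Chi x u p q = Eta x u p q * D_Phi x u p q"
  using D_Phi_nonzero by (simp add: Eta_eq inv_D_Phi_def)

lemma pdp_Chi: assumes w: "(x,u,p,q) \<in> W"
  shows "pd 2 Chi x u p q = lam x u p q * inv_D_Phi x u p q + Eta x u p q * Phi_p x u p q"
proof -
  note key = lam_eq_D_minor[OF w]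
  then have "pd 2 Chi x u p q * D_Phi x u p q
      = lam x u p q + Eta x u p q * Phi_p x u p q * D_Phi x u p q"
    using D_Chi_eq[OF w] by (simp add: algebra_simps)
  then show ?thesis using D_Phi_nonzero[OF w] by (simp add: inv_D_Phi_def field_simps)
qed

lemma agree_Dhat_Psi: "agree_on W (Dhat f Psi) (\<lambda>x u p q. Chi x u p q * D_Phi x u p q)"
  using Dhat_Psi by (auto simp: agree_on_def)
lemma agree_D_Chi: "agree_on W D_Chi (\<lambda>x u p q. Eta x u p q * D_Phi x u p q)"
  using D_Chi_eq by (auto simp: agree_on_def)
lemma agree_pdp_Chi:
  "agree_on W (pd 2 Chi) (\<lambda>x u p q. lam x u p q * inv_D_Phi x u p q + Eta x u p q * Phi_p x u p q)"
  using pdp_Chi by (auto simp: agree_on_def)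
lemma agree_Dhat_Eta: "agree_on W (Dhat f Eta) (\<lambda>x u p q. fbar x u p q * D_Phi x u p q)"
  using Dhat_Eta by (auto simp: agree_on_def)
lemma agree_pdq_Eta:
  "agree_on W (pd 3 Eta) (\<lambda>x u p q. lam x u p q * (inv_D_Phi x u p q * inv_D_Phi x u p q))"
  using pdq_Eta by (auto simp: agree_on_def)

lemma Dhat_lam: assumes w: "(x,u,p,q) \<in> W"
  shows "Dhat f lam x u p q = D_Phi x u p q * mu x u p q"
proof -
  have "pd 1 (Dhat f Psi) x u p q = Dhat f (pd 1 Psi) x u p q"
    using pdu_Dhat[OF smooth_f smooth4_Psi w] by (simp add: pdq_zero)
  moreover have "pd 1 (Dhat f Psi) x u p q
      = Chi_u x u p q * D_Phi x u p q + Chi x u p q * D_Phi_u x u p q"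
    using pd_cong_at[OF agree_Dhat_Psi w] w by (simp add: deriv_rules pdu_D_Phi Chi_u_def)
  moreover have "Dhat f (pd 1 Psi) x u p q
      = Eta x u p q * D_Phi x u p q * Phi_u x u p q + Chi x u p q * D_Phi_u x u p q
      + Dhat f lam x u p q"
    unfolding pdu_Psi using w D_Chi_eq[OF w]
    by (simp add: deriv_rules D_Phi_u_def D_Chi_def[symmetric])
  ultimately show ?thesis by (simp add: mu_def algebra_simps)
qed

lemma pdp_lam: assumes w: "(x,u,p,q) \<in> W"
  shows "pd 2 lam x u p q = mu x u p q * Phi_p x u p q
    - lam x u p q * Phi_u x u p q * inv_D_Phi x u p q"
  using pdp_lam_Chi[OF w] pdp_Chi[OF w] by (simp add: mu_def algebra_simps)

lemma pdp_Eta: assumes w: "(x,u,p,q) \<in> W"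
  shows "Eta_p x u p q = 2 * mu x u p q * inv_D_Phi x u p q
    - lam x u p q * D2_Phi x u p q * (inv_D_Phi x u p q * inv_D_Phi x u p q * inv_D_Phi x u p q)
    + fbar x u p q * Phi_p x u p q"
proof -
  have 1: "pd 2 (Dhat f Chi) x u p q = Dhat f (pd 2 Chi) x u p q + Chi_u x u p q"
    using pdp_Dhat[OF smooth_f smooth4_Chi w] by (simp add: pdq_zero Chi_u_def)
  have 2: "pd 2 (Dhat f Chi) x u p q
      = Eta_p x u p q * D_Phi x u p q + Eta x u p q * (D_Phi_p x u p q + Phi_u x u p q)"
    using pd_cong_at[OF agree_D_Chi w] w
    by (simp add: deriv_rules pdp_D_Phi Eta_p_def D_Chi_def[symmetric])
  have 3: "Dhat f (pd 2 Chi) x u p q = D_Phi x u p q * mu x u p q * inv_D_Phi x u p q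
      - lam x u p q * (D2_Phi x u p q * (inv_D_Phi x u p q * inv_D_Phi x u p q))
      + fbar x u p q * D_Phi x u p q * Phi_p x u p q + Eta x u p q * D_Phi_p x u p q"
    using Dhat_cong_on[OF agree_pdp_Chi w] w
    by (simp add: deriv_rules Dhat_lam pd_inv_D_Phi Dhat_inv_D_Phi Dhat_Eta
            D_Phi_p_def[symmetric])
  have "Eta_p x u p q * D_Phi x u p q
      = Dhat f (pd 2 Chi) x u p q + Chi_u x u p q - Eta x u p q * (D_Phi_p x u p q + Phi_u x u p q)"
    using 1 2 by linarith
  also have "\<dots> = D_Phi x u p q * mu x u p q * inv_D_Phi x u p q
      - lam x u p q * (D2_Phi x u p q * (inv_D_Phi x u p q * inv_D_Phi x u p q))
      + fbar x u p q * D_Phi x u p q * Phi_p x u p q + mu x u p q"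
    unfolding 3 by (simp add: mu_def algebra_simps)
  finally show ?thesis
    using D_Phi_nonzero[OF w] by (simp add: inv_D_Phi_def field_simps)
qed

lemma inv_D_Phi_eq: "(x,u,p,q) \<in> W
  \<Longrightarrow> inv_D_Phi x u p q
  = 1 / D_Phi x u p q" by (simp add: inv_D_Phi_def divide_inverse)
lemma inv_lam_eq: "(x,u,p,q) \<in> W
  \<Longrightarrow> inv_lam x u p q = 1 / lam x u p q" by (simp add: inv_lam_def divide_inverse)

lemma pd_inv_lam: assumes w: "(x,u,p,q) \<in> W"
  shows "pd i inv_lam x u p q = - pd i lam x u p q * (inv_lam x u p q * inv_lam x u p q)"
  unfolding inv_lam_def using smooth4_lam w lam_nonzero[OF w] by (rule pd_inverse)

lemma Dhat_inv_lam: assumes w: "(x,u,p,q) \<in> W"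
  shows "Dhat f inv_lam x u p q =
    - (D_Phi x u p q * mu x u p q) * (inv_lam x u p q * inv_lam x u p q)"
  unfolding inv_lam_def Dhat_lam[OF w, symmetric]
      using smooth4_lam w lam_nonzero[OF w] by (rule Dhat_inverse)

lemma agree_pdp_Eta: "agree_on W Eta_p (\<lambda>x u p q. 2 * mu x u p q * inv_D_Phi x u p q
  - lam x u p q * D2_Phi x u p q * (inv_D_Phi x u p q * inv_D_Phi x u p q * inv_D_Phi x u p q)
  + fbar x u p q * Phi_p x u p q)"
  using pdp_Eta by (auto simp: agree_on_def)

lemma Dhat_fbar: "(x,u,p,q) \<in> W
  \<Longrightarrow> Dhat f fbar x u p q
  = s * (Eta x u p q * D_Phi x u p q) + Chi x u p q * D_Phi x u p q"
  unfolding fbar_def by (simp add: deriv_rules D_Chi_def[symmetric] D_Chi_eq Dhat_Psi)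
lemma pd_fbar: "(x,u,p,q) \<in> W
  \<Longrightarrow> pd i fbar x u p q = s * pd i Chi x u p q + pd i Psi x u p q"
  unfolding fbar_def by (simp add: deriv_rules)

lemma pdq_f: assumes w: "(x,u,p,q) \<in> W"
  shows "pd 3 f x u p q = - 3 * D_Phi x u p q * mu x u p q * inv_lam x u p q
    + 3 * D2_Phi x u p q * inv_D_Phi x u p q"
proof -
  have 1: "pd 3 (Dhat f Eta) x u p q
      = Dhat f (pd 3 Eta) x u p q + Eta_p x u p q + pd 3 f x u p q * pd 3 Eta x u p q"
    using pdq_Dhat[OF smooth_f smooth4_Eta w] by (simp add: Eta_p_def)
  have 2: "pd 3 (Dhat f Eta) x u p q = fbar x u p q * Phi_p x u p q"
    using pd_cong_at[OF agree_Dhat_Eta w] w by (simp add: deriv_rules pdq_D_Phi pdq_zero)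
  have 3: "Dhat f (pd 3 Eta) x u p q
      = D_Phi x u p q * mu x u p q * (inv_D_Phi x u p q * inv_D_Phi x u p q)
      - 2 * lam x u p q * D2_Phi x u p q * (inv_D_Phi x u p q * inv_D_Phi x u p q
          * inv_D_Phi x u p q)"
    using Dhat_cong_on[OF agree_pdq_Eta w] w
    by (simp add: deriv_rules Dhat_lam pd_inv_D_Phi Dhat_inv_D_Phi algebra_simps)
  have "pd 3 f x u p q * (lam x u p q * (inv_D_Phi x u p q * inv_D_Phi x u p q)) =
     - D_Phi x u p q * mu x u p q * (inv_D_Phi x u p q * inv_D_Phi x u p q)
     - 2 * mu x u p q * inv_D_Phi x u p q
      + 3 * lam x u p q * D2_Phi x u p q * (inv_D_Phi x u p q * inv_D_Phi x u p q
      * inv_D_Phi x u p q)"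
    using 1 unfolding 2 3 pdq_Eta[OF w] pdp_Eta[OF w] by (simp add: algebra_simps)
  then show ?thesis using lam_nonzero[OF w] D_Phi_nonzero[OF w]
      by (simp add: inv_D_Phi_eq[OF w] inv_lam_eq[OF w] field_simps)
qed

lemma Dhat_Chi_u: assumes w: "(x,u,p,q) \<in> W"
  shows "Dhat f Chi_u x u p q = Eta_u x u p q * D_Phi x u p q + Eta x u p q * D_Phi_u x u p q"
proof -
  have "pd 1 (Dhat f Chi) x u p q = Dhat f (pd 1 Chi) x u p q"
    using pdu_Dhat[OF smooth_f smooth4_Chi w] by (simp add: pdq_zero)
  moreover have "pd 1 (Dhat f Chi) x u p q
      = Eta_u x u p q * D_Phi x u p q + Eta x u p q * D_Phi_u x u p q"
    using pd_cong_at[OF agree_D_Chi w] w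
    by (simp add: deriv_rules pdu_D_Phi Eta_u_def D_Chi_def[symmetric])
  ultimately show ?thesis by (simp add: Chi_u_def)
qed

lemma Dhat_mu: assumes w: "(x,u,p,q) \<in> W"
  shows "Dhat f mu x u p q = D_Phi x u p q * (Eta_u x u p q - fbar x u p q * Phi_u x u p q)"
  unfolding mu_def using w by (simp add: deriv_rules Dhat_Chi_u Dhat_Eta D_Phi_u_def[symmetric]
      algebra_simps)

lemma Chi_u_eq: "Chi_u x u p q = mu x u p q + Eta x u p q * Phi_u x u p q" by (simp add: mu_def)

lemma pdp_f: assumes w: "(x,u,p,q) \<in> W"
  shows "pd 2 f x u p q = s * D_Phi x u p q * D_Phi x u p q
     + 3 * D_Phi x u p q * D_Phi x u p q * (fbar x u p q * Phi_u x u p q - Eta_u x u p q)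
       * inv_lam x u p q
     + 3 * mu x u p q * D2_Phi x u p q * inv_lam x u p q + D3_Phi x u p q * inv_D_Phi x u p q
     - 3 * D2_Phi x u p q * D2_Phi x u p q * (inv_D_Phi x u p q * inv_D_Phi x u p q)"
proof -
  have 1: "pd 2 (Dhat f Eta) x u p q
      = Dhat f Eta_p x u p q + Eta_u x u p q
      + pd 2 f x u p q * (lam x u p q * (inv_D_Phi x u p q * inv_D_Phi x u p q))"
    using pdp_Dhat[OF smooth_f smooth4_Eta w] pdq_Eta[OF w] by (simp add: Eta_p_def Eta_u_def)
  have 2: "pd 2 (Dhat f Eta) x u p q
      = (s * (lam x u p q * inv_D_Phi x u p q + Eta x u p q * Phi_p x u p q)
      + Chi x u p q * Phi_p x u p q) * D_Phi x u p q
      + fbar x u p q * (D_Phi_p x u p q + Phi_u x u p q)"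
    using pd_cong_at[OF agree_Dhat_Eta w] w
    by (simp add: deriv_rules pdp_D_Phi pd_fbar pdp_Chi pdx_Psi pdp_Psi)
  have 3: "Dhat f Eta_p x u p q = Dhat f (\<lambda>x u p q. 2 * mu x u p q * inv_D_Phi x u p q
      - lam x u p q * D2_Phi x u p q * (inv_D_Phi x u p q * inv_D_Phi x u p q * inv_D_Phi x u p q)
     + fbar x u p q * Phi_p x u p q) x u p q"
    using Dhat_cong_on[OF agree_pdp_Eta w] .
  have k: "lam x u p q * (inv_D_Phi x u p q * inv_D_Phi x u p q) \<noteq> 0"
      using lam_nonzero[OF w] D_Phi_nonzero[OF w] by (simp add: inv_D_Phi_eq[OF w])
  have "pd 2 f x u p q =
      ((s * (lam x u p q * inv_D_Phi x u p q + Eta x u p q * Phi_p x u p q)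
          + Chi x u p q * Phi_p x u p q) * D_Phi x u p q
        + fbar x u p q * (D_Phi_p x u p q + Phi_u x u p q) - Dhat f Eta_p x u p q - Eta_u x u p q)
      / (lam x u p q * (inv_D_Phi x u p q * inv_D_Phi x u p q))"
    using k 1 2 by (simp add: eq_divide_eq)
  also have "\<dots> = s * D_Phi x u p q * D_Phi x u p q
     + 3 * D_Phi x u p q * D_Phi x u p q * (fbar x u p q * Phi_u x u p q - Eta_u x u p q)
       * inv_lam x u p q
     + 3 * mu x u p q * D2_Phi x u p q * inv_lam x u p q + D3_Phi x u p q * inv_D_Phi x u p q
     - 3 * D2_Phi x u p q * D2_Phi x u p q * (inv_D_Phi x u p q * inv_D_Phi x u p q)"
    unfolding 3 using w lam_nonzero[OF w] D_Phi_nonzero[OF w]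
    by (simp add: deriv_rules Dhat_mu pd_inv_D_Phi Dhat_inv_D_Phi Dhat_lam D3_Phi_def[symmetric]
        Dhat_fbar D_Phi_p_def[symmetric] smooth4_inv_lam inv_D_Phi_eq inv_lam_eq field_simps)
  finally show ?thesis .
qed

lemma pdu_f: assumes w: "(x,u,p,q) \<in> W"
  shows "pd 1 f x u p q = ((s * (mu x u p q + Eta x u p q * Phi_u x u p q)
    + Chi x u p q * Phi_u x u p q + lam x u p q) * D_Phi x u p q
    + fbar x u p q * D_Phi_u x u p q
          - D_Eta_u x u p q) * (D_Phi x u p q * D_Phi x u p q * inv_lam x u p q)"
proof -
  have 1: "pd 1 (Dhat f Eta) x u p q
      = D_Eta_u x u p q + pd 1 f x u p q * (lam x u p q * (inv_D_Phi x u p q * inv_D_Phi x u p q))"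
    using pdu_Dhat[OF smooth_f smooth4_Eta w] pdq_Eta[OF w]
    by (simp add: Eta_u_def[symmetric] D_Eta_u_def[symmetric])
  have 2: "pd 1 (Dhat f Eta) x u p q
      = (s * (mu x u p q + Eta x u p q * Phi_u x u p q) + Chi x u p q * Phi_u x u p q
      + lam x u p q) * D_Phi x u p q
      + fbar x u p q * D_Phi_u x u p q"
    using pd_cong_at[OF agree_Dhat_Eta w] w
    by (simp add: deriv_rules pdu_D_Phi pd_fbar pdu_Psi Chi_u_def[symmetric] Chi_u_eq)
  have k: "lam x u p q * (inv_D_Phi x u p q * inv_D_Phi x u p q) \<noteq> 0"
      using lam_nonzero[OF w] D_Phi_nonzero[OF w] by (simp add: inv_D_Phi_eq[OF w])
  have "pd 1 f x u p q = ((s * (mu x u p q + Eta x u p q * Phi_u x u p q)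
      + Chi x u p q * Phi_u x u p q + lam x u p q) * D_Phi x u p q
      + fbar x u p q * D_Phi_u x u p q
          - D_Eta_u x u p q) / (lam x u p q * (inv_D_Phi x u p q * inv_D_Phi x u p q))"
    using k 1 2 by (simp add: eq_divide_eq)
  also have "\<dots> = ((s * (mu x u p q + Eta x u p q * Phi_u x u p q)
      + Chi x u p q * Phi_u x u p q + lam x u p q) * D_Phi x u p q
      + fbar x u p q * D_Phi_u x u p q
          - D_Eta_u x u p q) * (D_Phi x u p q * D_Phi x u p q * inv_lam x u p q)"
    using lam_nonzero[OF w] D_Phi_nonzero[OF w]
    by (simp add: inv_D_Phi_eq[OF w] inv_lam_eq[OF w] field_simps)
  finally show ?thesis .
qed

lemma I1_eq: "(x,u,p,q) \<in> W
  \<Longrightarrow> I1 f x u p q = 3 * D_Phi x u p q * mu x u p q * inv_lam x u p q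
  - 3 * D2_Phi x u p q * inv_D_Phi x u p q"
  using pdq_f by (simp add: I1_def pdq_eq_pd)
lemma agree_I1: "agree_on W (I1 f) (\<lambda>x u p q. 3 * D_Phi x u p q * mu x u p q
  * inv_lam x u p q - 3 * D2_Phi x u p q * inv_D_Phi x u p q)"
  using I1_eq by (auto simp: agree_on_def)

lemma I2_eq: assumes w: "(x,u,p,q) \<in> W"
  shows "I2 f x u p q = 2 * D_Phi x u p q * D_Phi x u p q * (Eta_u x u p q
    - fbar x u p q * Phi_u x u p q) * inv_lam x u p q
    - s * D_Phi x u p q * D_Phi x u p q
         - D_Phi x u p q * D_Phi x u p q * mu x u p q * mu x u p q * (inv_lam x u p q
         * inv_lam x u p q)"
proof -
  have e1: "I2 f x u p q = - (2/9) * (I1 f x u p q)^2 - pd 2 f x u p q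
      - (1/3) * Dhat f (I1 f) x u p q"
    by (simp add: I2_def pdp_eq_pd)
  have e2: "Dhat f (I1 f) x u p q
      = Dhat f (\<lambda>x u p q. 3 * D_Phi x u p q * mu x u p q * inv_lam x u p q
      - 3 * D2_Phi x u p q * inv_D_Phi x u p q) x u p q"
    using Dhat_cong_on[OF agree_I1 w] .
  show ?thesis unfolding e1 e2 using w lam_nonzero[OF w] D_Phi_nonzero[OF w]
    by (simp add: I1_eq pdp_f deriv_rules Dhat_mu pd_inv_D_Phi Dhat_inv_D_Phi pd_inv_lam
        Dhat_inv_lam D2_Phi_def[symmetric] D3_Phi_def[symmetric] smooth4_inv_lam inv_D_Phi_eq
        inv_lam_eq field_simps power2_eq_square)
qed

lemma agree_I2: "agree_on W (I2 f) (\<lambda>x u p q. 2 * D_Phi x u p q * D_Phi x u p q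
  * (Eta_u x u p q - fbar x u p q * Phi_u x u p q) * inv_lam x u p q
  - s * D_Phi x u p q * D_Phi x u p q
         - D_Phi x u p q * D_Phi x u p q * mu x u p q * mu x u p q * (inv_lam x u p q
         * inv_lam x u p q))"
  using I2_eq by (auto simp: agree_on_def)

lemma I3_eq: assumes w: "(x,u,p,q) \<in> W"
  shows "I3 f x u p q = - (D_Phi x u p q * D_Phi x u p q * D_Phi x u p q)"
proof -
  have e1: "I3 f x u p q = - (1/3) * I1 f x u p q * I2 f x u p q - pd 1 f x u p q
      - (1/2) * Dhat f (I2 f) x u p q"
    by (simp add: I3_def pdu_eq_pd)
  have e2: "Dhat f (I2 f) x u p q
      = Dhat f (\<lambda>x u p q. 2 * D_Phi x u p q * D_Phi x u p q * (Eta_u x u p q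
      - fbar x u p q * Phi_u x u p q) * inv_lam x u p q
     - s * D_Phi x u p q * D_Phi x u p q
         - D_Phi x u p q * D_Phi x u p q * mu x u p q * mu x u p q * (inv_lam x u p q
         * inv_lam x u p q)) x u p q"
    using Dhat_cong_on[OF agree_I2 w] .
  show ?thesis unfolding e1 e2 using w lam_nonzero[OF w] D_Phi_nonzero[OF w]
    by (simp add: I1_eq I2_eq pdu_f deriv_rules Dhat_mu pd_inv_lam Dhat_inv_lam
        D2_Phi_def[symmetric] D_Eta_u_def[symmetric] Dhat_fbar D_Phi_u_def[symmetric]
        smooth4_inv_lam inv_D_Phi_eq inv_lam_eq field_simps)
qed

lemma J3_eq: assumes w: "(x,u,p,q) \<in> W" shows "J3 f x u p q = - D_Phi x u p q"
proof -
  have "(- D_Phi x u p q) ^ 3 = I3 f x u p q" using I3_eq[OF w] by (simp add: power3_eq_cube)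
  then show ?thesis unfolding J3_def by (intro odd_real_root_unique) simp_all
qed

lemma agree_J3: "agree_on W (J3 f) (\<lambda>x u p q. - D_Phi x u p q)"
  using J3_eq by (auto simp: agree_on_def)

lemma I4_eq: assumes w: "(x,u,p,q) \<in> W" shows "I4 f x u p q = - Phi_p x u p q"
proof -
  have "I4 f x u p q = pd 3 (\<lambda>x u p q. - D_Phi x u p q) x u p q"
    unfolding I4_def pdq_eq_pd using pd_cong_at[OF agree_J3 w] .
  then show ?thesis using w by (simp add: deriv_rules pdq_D_Phi)
qed

lemma Dhat_J3: assumes w: "(x,u,p,q) \<in> W" shows "Dhat f (J3 f) x u p q = - D2_Phi x u p q"
  using Dhat_cong_on[OF agree_J3 w] w by (simp add: deriv_rules D2_Phi_def[symmetric])

lemma pdu_J3: assumes w: "(x,u,p,q) \<in> W" shows "pd 1 (J3 f) x u p q = - D_Phi_u x u p q"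
  using pd_cong_at[OF agree_J3 w] w by (simp add: deriv_rules pdu_D_Phi)

lemma I5_eq: assumes w: "(x,u,p,q) \<in> W" shows "I5 f x u p q = - mu x u p q * inv_lam x u p q"
  unfolding I5_def using w lam_nonzero[OF w] D_Phi_nonzero[OF w]
  by (simp add: J3_eq Dhat_J3 I1_eq inv_D_Phi_eq inv_lam_eq field_simps power2_eq_square)

lemma agree_I5: "agree_on W (I5 f) (\<lambda>x u p q. - mu x u p q * inv_lam x u p q)"
  using I5_eq by (auto simp: agree_on_def)

lemma pdq_mu: assumes w: "(x,u,p,q) \<in> W"
  shows "pd 3 mu x u p q = - lam x u p q * (inv_D_Phi x u p q * inv_D_Phi x u p q) * Phi_u x u p q"
  unfolding mu_def using w by (simp add: deriv_rules pdq_zero pdq_Eta)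

lemma I7_eq: assumes w: "(x,u,p,q) \<in> W" shows "I7 f x u p q = - Phi_u x u p q"
proof -
  have "pdq (I5 f) x u p q = pd 3 (\<lambda>x u p q. - mu x u p q * inv_lam x u p q) x u p q"
    unfolding pdq_eq_pd using pd_cong_at[OF agree_I5 w] .
  then show ?thesis unfolding I7_def using w lam_nonzero[OF w] D_Phi_nonzero[OF w]
    by (simp add: deriv_rules smooth4_inv_lam pdq_mu pdq_zero J3_eq inv_D_Phi_eq inv_lam_eq
        field_simps power2_eq_square)
qed

lemma Dhat_I5: assumes w: "(x,u,p,q) \<in> W"
  shows "Dhat f (I5 f) x u p q = - (D_Phi x u p q * (Eta_u x u p q
    - fbar x u p q * Phi_u x u p q)) * inv_lam x u p q
    + mu x u p q * (D_Phi x u p q * mu x u p q) * (inv_lam x u p q * inv_lam x u p q)"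
  using Dhat_cong_on[OF agree_I5 w] w
  by (simp add: deriv_rules smooth4_inv_lam Dhat_mu pd_inv_lam Dhat_inv_lam)

lemma pdp_Chi_u: assumes w: "(x,u,p,q) \<in> W"
  shows "pd 2 Chi_u x u p q = lam_u x u p q * inv_D_Phi x u p q
    - lam x u p q * (D_Phi_u x u p q * (inv_D_Phi x u p q * inv_D_Phi x u p q))
    + Eta_u x u p q * Phi_p x u p q + Eta x u p q * Phi_up x u p q"
proof -
  have "pd 2 Chi_u x u p q = pd 1 (pd 2 Chi) x u p q"
    unfolding Chi_u_def using pd_commute_at[OF smooth4_Chi w, of 2 "1"] by simp
  also have "\<dots> = pd 1 (\<lambda>x u p q. lam x u p q * inv_D_Phi x u p q
      + Eta x u p q * Phi_p x u p q) x u p q"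
    using pd_cong_at[OF agree_pdp_Chi w] .
  finally show ?thesis using w by (simp add: deriv_rules pd_inv_D_Phi Dhat_inv_D_Phi pdu_D_Phi
      pdu_Phi_p lam_u_def Eta_u_def algebra_simps)
qed

lemma pdp_I5: assumes w: "(x,u,p,q) \<in> W"
  shows "pd 2 (I5 f) x u p q = - ((lam_u x u p q * inv_D_Phi x u p q
    - lam x u p q * (D_Phi_u x u p q * (inv_D_Phi x u p q * inv_D_Phi x u p q))
    + Eta_u x u p q * Phi_p x u p q
         + Eta x u p q * Phi_up x u p q - (Eta_p x u p q * Phi_u x u p q
         + Eta x u p q * Phi_up x u p q)) * inv_lam x u p q
     + mu x u p q * (- (mu x u p q * Phi_p x u p q
         - lam x u p q * Phi_u x u p q * inv_D_Phi x u p q) * (inv_lam x u p q * inv_lam x u p q)))"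
proof -
  have pm: "pd 2 mu x u p q = lam_u x u p q * inv_D_Phi x u p q
      - lam x u p q * (D_Phi_u x u p q * (inv_D_Phi x u p q * inv_D_Phi x u p q))
     + Eta_u x u p q * Phi_p x u p q
         + Eta x u p q * Phi_up x u p q - (Eta_p x u p q * Phi_u x u p q
         + Eta x u p q * Phi_up x u p q)"
    unfolding mu_def using w by (simp add: deriv_rules pdp_Chi_u Eta_p_def[symmetric]
        Phi_up_def[symmetric])
  have "pd 2 (I5 f) x u p q = pd 2 (\<lambda>x u p q. - mu x u p q * inv_lam x u p q) x u p q"
    using pd_cong_at[OF agree_I5 w] .
  then show ?thesis using w by (simp add: deriv_rules smooth4_inv_lam pm pd_inv_lam Dhat_inv_lam
      pdp_lam algebra_simps)
qed

lemma pdu_lam: assumes w: "(x,u,p,q) \<in> W"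
  shows "pd 1 lam x u p q = - Qinv f x u p q * lam x u p q"
  unfolding lam_u_def[symmetric]
  unfolding Qinv_def using w lam_nonzero[OF w] D_Phi_nonzero[OF w]
  by (simp add: I1_eq I7_eq J3_eq pdp_I5 pdu_J3 I4_eq Dhat_I5 pdp_Eta pdp_eq_pd pdu_eq_pd
      inv_D_Phi_eq inv_lam_eq field_simps power2_eq_square)

lemma Kinv_eq: assumes w: "(x,u,p,q) \<in> W" shows "Kinv f x u p q = s"
  unfolding Kinv_def I9_def using w lam_nonzero[OF w] D_Phi_nonzero[OF w]
  by (simp add: J3_eq Dhat_I5 I2_eq I5_eq inv_D_Phi_eq inv_lam_eq field_simps power2_eq_square)

definition contact_multiplier :: fn3 where
  "contact_multiplier x u p = lam x u p 0"

lemma contact_multiplier_eq: "contact_multiplier x u p = lam x u p q"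
  by (simp add: contact_multiplier_def indep_q_at_0[OF indep_q_lam])

lemma lift3_contact_multiplier: "lift3 contact_multiplier = lam"
  by (simp add: lift3_def contact_multiplier_eq fun_eq_iff)

context
  fixes x u p q :: real
  assumes w: "(x,u,p,q) \<in> W"
begin

lemmas invariants_eq = J3_eq[OF w] I1_eq[OF w] I2_eq[OF w] I4_eq[OF w] I5_eq[OF w] I7_eq[OF w]
  inv_D_Phi_eq[OF w] inv_lam_eq[OF w]

lemma system_multiplier:
  "contact_multiplier x u p \<noteq> 0"
  "Dhat f (lift3 contact_multiplier) x u p q
      = J3 f x u p q * I5 f x u p q * contact_multiplier x u p"
  "pdu (lift3 contact_multiplier) x u p q = - Qinv f x u p q * contact_multiplier x u p"
  "pdp (lift3 contact_multiplier) x u p q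
     = (I4 f x u p q * I5 f x u p q - I7 f x u p q / J3 f x u p q) * contact_multiplier x u p"
  "pdq (lift3 contact_multiplier) x u p q = 0"
  unfolding lift3_contact_multiplier contact_multiplier_eq[of x u p q]
  using lam_nonzero[OF w] D_Phi_nonzero[OF w] pdu_lam[OF w] pdq_zero(7)
  by (simp_all add: Dhat_lam[OF w] pdp_lam[OF w] invariants_eq pdu_eq_pd pdp_eq_pd pdq_eq_pd
      field_simps)

lemma system_phi:
  "Dhat f Phi x u p q = - J3 f x u p q"
  "pdu Phi x u p q = - I7 f x u p q"
  "pdp Phi x u p q = - I4 f x u p q"
  by (simp_all add: invariants_eq D_Phi_def Phi_u_def Phi_p_def pdu_eq_pd pdp_eq_pd)

lemma fbar_eq: "fbar x u p q = s * chi x u p + psi x u p"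
  by (simp add: fbar_def Chi_def Psi_def lift3_def)

lemma system_eta:
  "Dhat f Eta x u p q = - J3 f x u p q * (s * chi x u p + psi x u p)"
  "pdu Eta x u p q = ((s + (I5 f x u p q)\<^sup>2) / 2
      + I2 f x u p q / (2 * (J3 f x u p q)\<^sup>2))
     * contact_multiplier x u p - I7 f x u p q * (s * chi x u p + psi x u p)"
  "pdp Eta x u p q = (I5 f x u p q / J3 f x u p q + I1 f x u p q / (3 * (J3 f x u p q)\<^sup>2))
     * contact_multiplier x u p - I4 f x u p q * (s * chi x u p + psi x u p)"
  "pdq Eta x u p q = contact_multiplier x u p / (J3 f x u p q)\<^sup>2"
  unfolding contact_multiplier_eq[of x u p q]
  using lam_nonzero[OF w] D_Phi_nonzero[OF w]
  by (simp_all add: fbar_eq Dhat_Eta[OF w] pdp_Eta[OF w] pdq_Eta[OF w] Eta_u_def[symmetric]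
      Eta_p_def[symmetric] invariants_eq pdu_eq_pd pdp_eq_pd pdq_eq_pd field_simps power2_eq_square)

lemma system_chi:
  "Dhat f Chi x u p q = - J3 f x u p q * Eta x u p q"
  "pdu Chi x u p q = - I5 f x u p q * contact_multiplier x u p - I7 f x u p q * Eta x u p q"
  "pdp Chi x u p q = - contact_multiplier x u p / J3 f x u p q - I4 f x u p q * Eta x u p q"
  unfolding contact_multiplier_eq[of x u p q]
  using lam_nonzero[OF w] D_Phi_nonzero[OF w] D_Chi_eq[OF w]
  by (simp_all add: D_Chi_def Chi_u_def[symmetric] Chi_u_eq pdp_Chi[OF w] invariants_eq pdu_eq_pd
      pdp_eq_pd
      field_simps)

lemma system_psi:
  "I7 f x u p q * Dhat f Psi x u p q = J3 f x u p q * (pdu Psi x u p q - contact_multiplier x u p)"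
  "pdx Psi x u p q = chi x u p * pdx Phi x u p q - p * contact_multiplier x u p"
  "pdp Psi x u p q = - I4 f x u p q * chi x u p"
  "chi x u p = Dhat f Psi x u p q / Dhat f Phi x u p q"
  unfolding contact_multiplier_eq[of x u p q]
  using D_Phi_nonzero[OF w] pdx_Psi[OF w] pdp_Psi[OF w]
  by (simp_all add: Dhat_Psi[OF w] pdu_Psi invariants_eq Chi_def lift3_def D_Phi_def[symmetric]
      pdx_eq_pd pdu_eq_pd pdp_eq_pd algebra_simps)

end

end

theorem mainTheorem3:
  fixes W :: "(real \<times> real \<times> real \<times> real) set"
    and f :: fn4 and s :: real and phi psi chi :: fn3
  assumes "open W"
    and "smooth4 W f"
    and "\<forall>x u p q. (x,u,p,q) \<in> W \<longrightarrow> I3 f x u p q \<noteq> 0"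
    and "contact_equiv_on W f s phi psi chi"
  shows "(\<forall>x u p q. (x,u,p,q) \<in> W \<longrightarrow> s = Kinv f x u p q) \<and>
    (\<exists>a1 :: fn3. smooth4 W (lift3 a1) \<and>
      (\<forall>x u p q. (x,u,p,q) \<in> W \<longrightarrow>
        (let A = a1 x u p; eta = eta_of f phi chi; fb = s * chi x u p + psi x u p;
             j = J3 f x u p q; i1 = I1 f x u p q; i2 = I2 f x u p q; i4 = I4 f x u p q;
             i5 = I5 f x u p q; i7 = I7 f x u p q; e = eta x u p q
         in A \<noteq> 0
          \<comment> \<open>(1)\<close>
          \<and> Dhat f (lift3 a1) x u p q = j * i5 * A
          \<and> pdu (lift3 a1) x u p q = - Qinv f x u p q * A
          \<and> pdp (lift3 a1) x u p q = (i4 * i5 - i7 / j) * A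
          \<and> pdq (lift3 a1) x u p q = 0
          \<comment> \<open>(2)\<close>
          \<and> Dhat f (lift3 phi) x u p q = - j
          \<and> pdu (lift3 phi) x u p q = - i7
          \<and> pdp (lift3 phi) x u p q = - i4
          \<comment> \<open>(3)\<close>
          \<and> Dhat f eta x u p q = - j * fb
          \<and> pdu eta x u p q = ((s + i5^2) / 2 + i2 / (2 * j^2)) * A - i7 * fb
          \<and> pdp eta x u p q = (i5 / j + i1 / (3 * j^2)) * A - i4 * fb
          \<and> pdq eta x u p q = A / j^2
          \<and> Dhat f (lift3 chi) x u p q = - j * e
          \<and> pdu (lift3 chi) x u p q = - i5 * A - i7 * e
          \<and> pdp (lift3 chi) x u p q = - A / j - i4 * e
          \<and> i7 * Dhat f (lift3 psi) x u p q = j * (pdu (lift3 psi) x u p q - A)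
          \<and> pdx (lift3 psi) x u p q = chi x u p * pdx (lift3 phi) x u p q - p * A
          \<and> pdp (lift3 psi) x u p q = - i4 * chi x u p
          \<and> chi x u p = Dhat f (lift3 psi) x u p q / Dhat f (lift3 phi) x u p q)))"
proof -
  interpret contact_equivalence W f s phi psi chi
    using assms(1,2,4) by unfold_locales
  have "smooth4 W (lift3 contact_multiplier)"
    unfolding lift3_contact_multiplier by (rule smooth4_lam)
  then show ?thesis
    unfolding Let_def Phi_def[symmetric] Psi_def[symmetric] Chi_def[symmetric] Eta_def[symmetric]
    by (intro conjI exI[of _ contact_multiplier] allI impI;
        simp add: Kinv_eq system_multiplier system_phi system_eta system_chi system_psi)
qed

end
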